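(* Let $R$ be a ring. \begin{enumerate} \item Every Ore set of $R$ is a localizable set of $R$. \item If $S$ is an Ore set of $R$, then $S$ is localizable with $\mathrm{ass}_R(S)=\mathfrak{a}$, where $\mathfrak{a}=\{r\in R: srt=0\text{ for some } s,t\in S\}$, and $R\langle S^{-1}\rangle$ is $R$-isomorphic to the Ore localization $\overline{S}^{-1}\overline{R}$, where $\overline{R}=R/\mathfrak{a}$ and $\overline{S}$ is the image of $S$ in $\overline{R}$ (a denominator set of $\overline{R}$). \end{enumerate}
   Context: Rings are associative with $1$. Multiplicative set: $SS\subseteq S$, $1\in S$, $0\notin S$. Ore set: $Sr\cap Rs\neq\emptyset$ and $rS\cap sR\neq\emptyset$ for all $r\in R,s\in S$. $R\langle S^{-1}\rangle=R\langle X_S\rangle/I_S$, where $R\langle X_S\rangle$ is freely generated by $R$ and noncommuting indeterminates $x_s$ ($s\in S$) and $I_S$ is generated by $sx_s-1,x_ss-1$; $\mathrm{ass}_R(S)=\ker(R\to R\langle S^{-1}\rangle)$. $S$ is localizable if $R\langle S^{-1}\rangle\ne0$ and every element is both of the form $(x_s+I_S)(r+I_S)$ and of the form $(r'+I_S)(x_{s'}+I_S)$, $s,s'\in S$, $r,r'\in R$. *)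

theory Defs
  imports "HOL-Algebra.QuotRing"
begin

definition mult_set :: "('a, 'm) ring_scheme \<Rightarrow> 'a set \<Rightarrow> bool" where
  "mult_set R S \<longleftrightarrow> S \<subseteq> carrier R \<and> \<one>\<^bsub>R\<^esub> \<in> S \<and> \<zero>\<^bsub>R\<^esub> \<notin> S
     \<and> (\<forall>s\<in>S. \<forall>t\<in>S. s \<otimes>\<^bsub>R\<^esub> t \<in> S)"

definition ore_set :: "('a, 'm) ring_scheme \<Rightarrow> 'a set \<Rightarrow> bool" where
  "ore_set R S \<longleftrightarrow> mult_set R S \<and>
     (\<forall>r\<in>carrier R. \<forall>s\<in>S.
        (\<exists>s'\<in>S. \<exists>r'\<in>carrier R. s' \<otimes>\<^bsub>R\<^esub> r = r' \<otimes>\<^bsub>R\<^esub> s) \<and>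
        (\<exists>s'\<in>S. \<exists>r'\<in>carrier R. r \<otimes>\<^bsub>R\<^esub> s' = s \<otimes>\<^bsub>R\<^esub> r'))"

text \<open>Z<A>: finitely supported integer-valued functions on words over A,
  with convolution (concatenation) product.\<close>
definition free_ring :: "'b set \<Rightarrow> ('b list \<Rightarrow> int) ring" where
  "free_ring A = \<lparr>carrier = {f. finite {w. f w \<noteq> 0} \<and> (\<forall>w. f w \<noteq> 0 \<longrightarrow> set w \<subseteq> A)},
      mult = (\<lambda>f g w. \<Sum>i\<in>{..length w}. f (take i w) * g (drop i w)),
      one = (\<lambda>w. if w = [] then 1 else 0),
      zero = (\<lambda>w. 0),
      add = (\<lambda>f g w. f w + g w)\<rparr>"

definition letter :: "'b \<Rightarrow> ('b list \<Rightarrow> int)" where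
  "letter a = (\<lambda>w. if w = [a] then 1 else 0)"

text \<open>R<X_S> is the ring freely generated by R and noncommuting indeterminates x_s.
  We realise R<S^{-1}> = R<X_S>/I_S as the free ring Z<A> on the alphabet
  A = (Inl ` carrier R) \<union> (Inr ` S) (letter Inl r stands for r, letter Inr s for x_s)
  modulo the two-sided ideal generated by the relations making r \<mapsto> letter (Inl r)
  a unital ring homomorphism (this gives R<X_S>) together with s x_s - 1, x_s s - 1.\<close>

definition loc_alph :: "('a, 'm) ring_scheme \<Rightarrow> 'a set \<Rightarrow> ('a + 'a) set" where
  "loc_alph R S = Inl ` carrier R \<union> Inr ` S"

definition loc_free :: "('a, 'm) ring_scheme \<Rightarrow> 'a set \<Rightarrow> (('a + 'a) list \<Rightarrow> int) ring" where
  "loc_free R S = free_ring (loc_alph R S)"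

definition loc_rels :: "('a, 'm) ring_scheme \<Rightarrow> 'a set \<Rightarrow> (('a + 'a) list \<Rightarrow> int) set" where
  "loc_rels R S =
     {(\<lambda>w. letter (Inl (r \<oplus>\<^bsub>R\<^esub> r')) w - letter (Inl r) w - letter (Inl r') w)
        | r r'. r \<in> carrier R \<and> r' \<in> carrier R}
   \<union> {(\<lambda>w. letter (Inl (r \<otimes>\<^bsub>R\<^esub> r')) w
            - (letter (Inl r) \<otimes>\<^bsub>loc_free R S\<^esub> letter (Inl r')) w)
        | r r'. r \<in> carrier R \<and> r' \<in> carrier R}
   \<union> {(\<lambda>w. letter (Inl \<one>\<^bsub>R\<^esub>) w - \<one>\<^bsub>loc_free R S\<^esub> w)}
   \<union> {(\<lambda>w. (letter (Inl s) \<otimes>\<^bsub>loc_free R S\<^esub> letter (Inr s)) w - \<one>\<^bsub>loc_free R S\<^esub> w)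
        | s. s \<in> S}
   \<union> {(\<lambda>w. (letter (Inr s) \<otimes>\<^bsub>loc_free R S\<^esub> letter (Inl s)) w - \<one>\<^bsub>loc_free R S\<^esub> w)
        | s. s \<in> S}"

definition loc_ideal :: "('a, 'm) ring_scheme \<Rightarrow> 'a set \<Rightarrow> (('a + 'a) list \<Rightarrow> int) set" where
  "loc_ideal R S = genideal (loc_free R S) (loc_rels R S)"

definition loc_ring :: "('a, 'm) ring_scheme \<Rightarrow> 'a set \<Rightarrow> (('a + 'a) list \<Rightarrow> int) set ring" where
  "loc_ring R S = loc_free R S Quot loc_ideal R S"

definition loc_map :: "('a, 'm) ring_scheme \<Rightarrow> 'a set \<Rightarrow> 'a \<Rightarrow> (('a + 'a) list \<Rightarrow> int) set" where
  "loc_map R S r = a_r_coset (loc_free R S) (loc_ideal R S) (letter (Inl r))"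

definition loc_x :: "('a, 'm) ring_scheme \<Rightarrow> 'a set \<Rightarrow> 'a \<Rightarrow> (('a + 'a) list \<Rightarrow> int) set" where
  "loc_x R S s = a_r_coset (loc_free R S) (loc_ideal R S) (letter (Inr s))"

definition ass :: "('a, 'm) ring_scheme \<Rightarrow> 'a set \<Rightarrow> 'a set" where
  "ass R S = {r \<in> carrier R. loc_map R S r = \<zero>\<^bsub>loc_ring R S\<^esub>}"

definition localizable :: "('a, 'm) ring_scheme \<Rightarrow> 'a set \<Rightarrow> bool" where
  "localizable R S \<longleftrightarrow> mult_set R S \<and>
     \<one>\<^bsub>loc_ring R S\<^esub> \<noteq> \<zero>\<^bsub>loc_ring R S\<^esub> \<and>
     (\<forall>u\<in>carrier (loc_ring R S).
        (\<exists>s\<in>S. \<exists>r\<in>carrier R. u = loc_x R S s \<otimes>\<^bsub>loc_ring R S\<^esub> loc_map R S r) \<and>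
        (\<exists>s'\<in>S. \<exists>r'\<in>carrier R. u = loc_map R S r' \<otimes>\<^bsub>loc_ring R S\<^esub> loc_x R S s'))"

definition left_denominator_set :: "('a, 'm) ring_scheme \<Rightarrow> 'a set \<Rightarrow> bool" where
  "left_denominator_set A T \<longleftrightarrow> T \<subseteq> carrier A \<and> \<one>\<^bsub>A\<^esub> \<in> T
     \<and> (\<forall>s\<in>T. \<forall>t\<in>T. s \<otimes>\<^bsub>A\<^esub> t \<in> T)
     \<and> (\<forall>a\<in>carrier A. \<forall>t\<in>T. \<exists>t'\<in>T. \<exists>a'\<in>carrier A. t' \<otimes>\<^bsub>A\<^esub> a = a' \<otimes>\<^bsub>A\<^esub> t)
     \<and> (\<forall>a\<in>carrier A. \<forall>t\<in>T. a \<otimes>\<^bsub>A\<^esub> t = \<zero>\<^bsub>A\<^esub> \<longrightarrow> (\<exists>t'\<in>T. t' \<otimes>\<^bsub>A\<^esub> a = \<zero>\<^bsub>A\<^esub>))"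

definition left_ring_of_fractions ::
  "('a, 'm) ring_scheme \<Rightarrow> 'a set \<Rightarrow> ('q, 'n) ring_scheme \<Rightarrow> ('a \<Rightarrow> 'q) \<Rightarrow> bool" where
  "left_ring_of_fractions A T Q \<phi> \<longleftrightarrow> ring Q \<and> \<phi> \<in> ring_hom A Q
     \<and> (\<forall>t\<in>T. \<phi> t \<in> Units Q)
     \<and> (\<forall>q\<in>carrier Q. \<exists>t\<in>T. \<exists>a\<in>carrier A. q = inv\<^bsub>Q\<^esub> (\<phi> t) \<otimes>\<^bsub>Q\<^esub> \<phi> a)
     \<and> (\<forall>a\<in>carrier A. \<phi> a = \<zero>\<^bsub>Q\<^esub> \<longleftrightarrow> (\<exists>t\<in>T. t \<otimes>\<^bsub>A\<^esub> a = \<zero>\<^bsub>A\<^esub>))"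

definition frak_a :: "('a, 'm) ring_scheme \<Rightarrow> 'a set \<Rightarrow> 'a set" where
  "frak_a R S = {r \<in> carrier R. \<exists>s\<in>S. \<exists>t\<in>S. s \<otimes>\<^bsub>R\<^esub> r \<otimes>\<^bsub>R\<^esub> t = \<zero>\<^bsub>R\<^esub>}"

end

theory Submission
  imports Defs
begin

text \<open>
  Write \<open>x\<^sub>s\<close> for the class of the indeterminate belonging to \<open>s \<in> S\<close>. The ring
  \<open>R\<langle>S\<inverse>\<rangle>\<close> maps to every ring that receives a homomorphism from \<open>R\<close> inverting \<open>S\<close>, and
  it is generated by \<open>R\<close> and the \<open>x\<^sub>s\<close>. For an Ore set the Ore conditions move each
  \<open>x\<^sub>s\<close> past elements of \<open>R\<close>, so every element has the form \<open>x\<^sub>s r\<close> and the form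
  \<open>r x\<^sub>s\<close>, and \<open>s r t = 0\<close> forces \<open>r\<close> to vanish in \<open>R\<langle>S\<inverse>\<rangle>\<close>, i.e.
  \<open>\<aa> \<subseteq> ass\<^sub>R(S)\<close>. Modulo \<open>\<aa>\<close> the image of \<open>S\<close> is a regular Ore set, so \<open>R/\<aa>\<close> has a
  ring of left fractions \<open>Q\<close>. The induced map \<open>R\<langle>S\<inverse>\<rangle> \<rightarrow> Q\<close> sends \<open>x\<^sub>s r\<close> to
  \<open>s\<inverse> r\<close>; it is onto, and it is injective because \<open>s\<inverse> r = 0\<close> in \<open>Q\<close> forces \<open>r \<in> \<aa>\<close>.
  Taking for \<open>Q\<close> the ring of fractions built from pairs gives \<open>ass\<^sub>R(S) = \<aa>\<close> and hence
  \<open>R\<langle>S\<inverse>\<rangle> \<noteq> 0\<close>; taking an arbitrary ring of left fractions gives the isomorphism.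
\<close>

section \<open>The free ring on an alphabet\<close>

definition splits :: "'b list \<Rightarrow> ('b list \<times> 'b list) set" where
  "splits w = {(u, v). u @ v = w}"

lemma splits_eq_image: "splits w = (\<lambda>i. (take i w, drop i w)) ` {..length w}"
proof -
  have "(u, v) \<in> (\<lambda>i. (take i w, drop i w)) ` {..length w}" if "u @ v = w" for u v
    using that by (auto intro!: image_eqI[where x = "length u"])
  then show ?thesis unfolding splits_def by auto
qed

lemma finite_splits [simp]: "finite (splits w)"
  unfolding splits_eq_image by simp

lemma sum_splits: "(\<Sum>(u, v)\<in>splits w. h u v) = (\<Sum>i\<le>length w. h (take i w) (drop i w))"
proof -
  have "inj_on (\<lambda>i. (take i w, drop i w)) {..length w}"
    by (auto simp: inj_on_def) (metis length_take min.absorb2)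
  then show ?thesis unfolding splits_eq_image by (simp add: sum.reindex)
qed

definition word_conv :: "('b list \<Rightarrow> int) \<Rightarrow> ('b list \<Rightarrow> int) \<Rightarrow> 'b list \<Rightarrow> int" where
  "word_conv f g w = (\<Sum>(u, v)\<in>splits w. f u * g v)"

definition free_monom :: "int \<Rightarrow> 'b list \<Rightarrow> 'b list \<Rightarrow> int" where
  "free_monom c u = (\<lambda>w. if w = u then c else 0)"

lemma free_ring_simps:
  "carrier (free_ring A) = {f. finite {w. f w \<noteq> 0} \<and> (\<forall>w. f w \<noteq> 0 \<longrightarrow> set w \<subseteq> A)}"
  "mult (free_ring A) = word_conv"
  "one (free_ring A) = free_monom 1 []"
  "zero (free_ring A) = (\<lambda>w. 0)"
  "add (free_ring A) = (\<lambda>f g w. f w + g w)"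
  unfolding free_ring_def word_conv_def by (auto simp: fun_eq_iff sum_splits free_monom_def)

lemma word_conv_assoc: "word_conv (word_conv f g) h = word_conv f (word_conv g h)"
proof
  fix w
  have "word_conv (word_conv f g) h w
      = (\<Sum>p\<in>splits w. \<Sum>q\<in>splits (fst p). f (fst q) * g (snd q) * h (snd p))"
    unfolding word_conv_def by (auto simp: sum_distrib_right split_beta intro!: sum.cong)
  also have "\<dots> = (\<Sum>(a, b, v)\<in>{(a, b, v). a @ b @ v = w}. f a * g b * h v)"
    by (subst sum.Sigma, simp_all,
        rule sum.reindex_bij_witness[where i = "\<lambda>(a, b, v). ((a @ b, v), (a, b))"
          and j = "\<lambda>((x, v), (a, b)). (a, b, v)"])
      (auto simp: splits_def)
  also have "\<dots> = (\<Sum>p\<in>splits w. \<Sum>q\<in>splits (snd p). f (fst p) * g (fst q) * h (snd q))"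
    by (subst sum.Sigma, simp_all,
        rule sum.reindex_bij_witness[where j = "\<lambda>(a, b, v). ((a, b @ v), (b, v))"
          and i = "\<lambda>((a, y), (b, v)). (a, b, v)"])
      (auto simp: splits_def)
  also have "\<dots> = word_conv f (word_conv g h) w"
    unfolding word_conv_def
    by (auto simp: sum_distrib_left mult.assoc split_beta intro!: sum.cong)
  finally show "word_conv (word_conv f g) h w = word_conv f (word_conv g h) w" .
qed

lemma word_conv_one_left: "word_conv (free_monom 1 []) f = f"
proof
  fix w
  have "word_conv (free_monom 1 []) f w = (\<Sum>p\<in>splits w. if p = ([], w) then f w else 0)"
    unfolding word_conv_def free_monom_def
    by (rule sum.cong) (auto simp: splits_def split: if_splits)
  then show "word_conv (free_monom 1 []) f w = f w"
    by (subst (asm) sum.delta[OF finite_splits]) (auto simp: splits_def)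
qed

lemma word_conv_one_right: "word_conv f (free_monom 1 []) = f"
proof
  fix w
  have "word_conv f (free_monom 1 []) w = (\<Sum>p\<in>splits w. if p = (w, []) then f w else 0)"
    unfolding word_conv_def free_monom_def
    by (rule sum.cong) (auto simp: splits_def split: if_splits)
  then show "word_conv f (free_monom 1 []) w = f w"
    by (subst (asm) sum.delta[OF finite_splits]) (auto simp: splits_def)
qed

lemma word_conv_free_monom:
  "word_conv (free_monom a u) (free_monom b v) = free_monom (a * b) (u @ v)"
proof
  fix w
  have "word_conv (free_monom a u) (free_monom b v) w
      = (\<Sum>p\<in>splits w. if p = (u, v) then a * b else 0)"
    unfolding word_conv_def free_monom_def by (rule sum.cong) (auto split: if_splits)
  then show "word_conv (free_monom a u) (free_monom b v) w = free_monom (a * b) (u @ v) w"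
    by (subst (asm) sum.delta[OF finite_splits]) (auto simp: splits_def free_monom_def)
qed

lemma word_conv_nonzero_split:
  assumes "word_conv f g w \<noteq> 0"
  obtains u v where "w = u @ v" "f u \<noteq> 0" "g v \<noteq> 0"
proof -
  obtain p where "p \<in> splits w" "(case p of (u, v) \<Rightarrow> f u * g v) \<noteq> 0"
    using assms unfolding word_conv_def by (meson sum.not_neutral_contains_not_neutral)
  then show thesis using that by (auto simp: splits_def split_beta)
qed

lemma word_conv_closed:
  assumes "f \<in> carrier (free_ring A)" "g \<in> carrier (free_ring A)"
  shows "word_conv f g \<in> carrier (free_ring A)"
proof -
  have "{w. word_conv f g w \<noteq> 0} \<subseteq> (\<lambda>(u, v). u @ v) ` ({u. f u \<noteq> 0} \<times> {v. g v \<noteq> 0})"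
    by (auto elim!: word_conv_nonzero_split)
  moreover have "set w \<subseteq> A" if "word_conv f g w \<noteq> 0" for w
    using that
  proof (rule word_conv_nonzero_split)
    fix u v assume "w = u @ v" "f u \<noteq> 0" "g v \<noteq> 0"
    then show ?thesis using assms by (force simp: free_ring_simps)
  qed
  ultimately show ?thesis
    using assms by (auto simp: free_ring_simps intro: finite_subset)
qed

lemma ring_free_ring: "ring (free_ring A)"
proof (rule ringI)
  show "abelian_group (free_ring A)"
  proof (rule abelian_groupI)
    fix x y assume "x \<in> carrier (free_ring A)" "y \<in> carrier (free_ring A)"
    then show "x \<oplus>\<^bsub>free_ring A\<^esub> y \<in> carrier (free_ring A)"
      unfolding free_ring_simps
      by (auto intro: finite_subset[of _ "{w. x w \<noteq> 0} \<union> {w. y w \<noteq> 0}"])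
        (metis add.right_neutral add_0 subsetD)
  next
    fix x assume "x \<in> carrier (free_ring A)"
    then show "\<exists>y\<in>carrier (free_ring A). y \<oplus>\<^bsub>free_ring A\<^esub> x = \<zero>\<^bsub>free_ring A\<^esub>"
      unfolding free_ring_simps by (intro bexI[where x = "\<lambda>w. - x w"]) auto
  qed (auto simp: free_ring_simps)
  show "monoid (free_ring A)"
  proof (rule monoidI)
    show "\<one>\<^bsub>free_ring A\<^esub> \<in> carrier (free_ring A)"
      by (simp add: free_ring_simps free_monom_def)
  qed (simp_all only: free_ring_simps(2,3) word_conv_closed word_conv_assoc
         word_conv_one_left word_conv_one_right)
qed (simp_all add: free_ring_simps word_conv_def fun_eq_iff sum.distrib
       distrib_left distrib_right split_beta)

lemma free_monom_closed: "set u \<subseteq> A \<Longrightarrow> free_monom c u \<in> carrier (free_ring A)"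
  unfolding free_ring_simps free_monom_def by auto

lemma letter_eq_free_monom: "letter a = free_monom 1 [a]"
  unfolding letter_def free_monom_def by simp

lemma a_inv_free_ring:
  assumes "f \<in> carrier (free_ring A)"
  shows "\<ominus>\<^bsub>free_ring A\<^esub> f = (\<lambda>w. - f w)"
proof -
  interpret F: ring "free_ring A" by (rule ring_free_ring)
  show ?thesis
    by (rule F.minus_equality) (use assms in \<open>auto simp: free_ring_simps\<close>)
qed

lemma free_ring_support_induct [consumes 1, case_names zero monom add]:
  assumes "f \<in> carrier (free_ring A)"
    and zero: "P \<zero>\<^bsub>free_ring A\<^esub>"
    and monom: "\<And>c u. set u \<subseteq> A \<Longrightarrow> P (free_monom c u)"
    and add: "\<And>x y. x \<in> carrier (free_ring A) \<Longrightarrow> y \<in> carrier (free_ring A) \<Longrightarrow> P x \<Longrightarrow> P y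
             \<Longrightarrow> P (x \<oplus>\<^bsub>free_ring A\<^esub> y)"
  shows "P f"
proof -
  have "P f" if "f \<in> carrier (free_ring A)" "{w. f w \<noteq> 0} \<subseteq> W" "finite W" for f W
    using that(3,1,2)
  proof (induction W arbitrary: f rule: finite_induct)
    case empty
    then have "f = \<zero>\<^bsub>free_ring A\<^esub>" by (auto simp: free_ring_simps)
    then show ?case using zero by simp
  next
    case (insert u W)
    define g where "g = (\<lambda>v. if v = u then 0 else f v)"
    have g: "g \<in> carrier (free_ring A)" "{w. g w \<noteq> 0} \<subseteq> W"
      using insert.prems by (auto simp: free_ring_simps g_def intro: finite_subset)
    show ?case
    proof (cases "f u = 0")
      case True
      then have "f = g" by (auto simp: g_def)
      then show ?thesis using insert.IH g by simp
    next
      case False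
      then have u: "set u \<subseteq> A" using insert.prems by (auto simp: free_ring_simps)
      have "f = g \<oplus>\<^bsub>free_ring A\<^esub> free_monom (f u) u"
        by (auto simp: free_ring_simps g_def free_monom_def)
      moreover have "P (g \<oplus>\<^bsub>free_ring A\<^esub> free_monom (f u) u)"
        using add[OF g(1) free_monom_closed[OF u]] insert.IH[OF g] monom[OF u] by blast
      ultimately show ?thesis by simp
    qed
  qed
  then show ?thesis using assms(1) by (auto simp: free_ring_simps)
qed

lemma free_ring_induct [consumes 1, case_names zero word neg add]:
  assumes f: "f \<in> carrier (free_ring A)"
    and zero: "P \<zero>\<^bsub>free_ring A\<^esub>"
    and word: "\<And>u. set u \<subseteq> A \<Longrightarrow> P (free_monom 1 u)"
    and neg: "\<And>x. x \<in> carrier (free_ring A) \<Longrightarrow> P x \<Longrightarrow> P (\<ominus>\<^bsub>free_ring A\<^esub> x)"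
    and add: "\<And>x y. x \<in> carrier (free_ring A) \<Longrightarrow> y \<in> carrier (free_ring A) \<Longrightarrow> P x \<Longrightarrow> P y
             \<Longrightarrow> P (x \<oplus>\<^bsub>free_ring A\<^esub> y)"
  shows "P f"
  using f
proof (induction rule: free_ring_support_induct)
  case (monom c u)
  interpret F: ring "free_ring A" by (rule ring_free_ring)
  have step: "free_monom (c + d) u = free_monom c u \<oplus>\<^bsub>free_ring A\<^esub> free_monom d u" for c d
    by (auto simp: free_ring_simps free_monom_def)
  have neg_one: "free_monom (- 1) u = \<ominus>\<^bsub>free_ring A\<^esub> free_monom 1 u"
    using a_inv_free_ring[OF free_monom_closed[OF monom], of 1]
    by (simp add: free_monom_def fun_eq_iff)
  show ?case
  proof (induction c rule: int_induct[where k = 0])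
    case base
    then show ?case using zero by (simp add: free_ring_simps free_monom_def fun_eq_iff)
  next
    case (step1 i)
    have "P (free_monom i u \<oplus>\<^bsub>free_ring A\<^esub> free_monom 1 u)"
      using monom step1 by (intro add free_monom_closed word)
    then show ?case by (simp only: step)
  next
    case (step2 i)
    have "P (free_monom i u \<oplus>\<^bsub>free_ring A\<^esub> free_monom (- 1) u)"
      unfolding neg_one using monom step2 by (intro add neg free_monom_closed word F.a_inv_closed)
    then show ?case by (simp only: step[symmetric] diff_conv_add_uminus)
  qed
qed (use assms in auto)

section \<open>Evaluating the free ring in a ring\<close>

definition word_prod :: "('c, 'm) ring_scheme \<Rightarrow> ('b \<Rightarrow> 'c) \<Rightarrow> 'b list \<Rightarrow> 'c" where
  "word_prod B g w = foldr (\<lambda>a r. g a \<otimes>\<^bsub>B\<^esub> r) w \<one>\<^bsub>B\<^esub>"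

definition free_eval :: "('c, 'm) ring_scheme \<Rightarrow> ('b \<Rightarrow> 'c) \<Rightarrow> ('b list \<Rightarrow> int) \<Rightarrow> 'c" where
  "free_eval B g f = (\<Oplus>\<^bsub>B\<^esub> w\<in>{w. f w \<noteq> 0}. [f w] \<cdot>\<^bsub>B\<^esub> word_prod B g w)"

locale free_ring_eval = ring B for B (structure) +
  fixes g :: "'b \<Rightarrow> 'c"
  assumes g_closed: "g a \<in> carrier B"
begin

lemma word_prod_closed [simp]: "word_prod B g w \<in> carrier B"
  by (induction w) (auto simp: word_prod_def g_closed)

lemma word_prod_Nil: "word_prod B g [] = \<one>"
  by (simp add: word_prod_def)

lemma word_prod_Cons: "word_prod B g (a # u) = g a \<otimes> word_prod B g u"
  by (simp add: word_prod_def)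

lemma word_prod_append: "word_prod B g (u @ v) = word_prod B g u \<otimes> word_prod B g v"
  by (induction u) (simp_all add: word_prod_Nil word_prod_Cons g_closed m_assoc)

lemma add_pow_int_zero: "[(0::int)] \<cdot> x = \<zero>"
  by (simp add: add_pow_def)

lemma free_eval_eq_finsum:
  assumes "finite W" "{w. f w \<noteq> 0} \<subseteq> W"
  shows "free_eval B g f = (\<Oplus>w\<in>W. [f w] \<cdot> word_prod B g w)"
  unfolding free_eval_def
  by (rule add.finprod_mono_neutral_cong_left)
    (use assms in \<open>auto simp: add.int_pow_closed add_pow_int_zero\<close>)

lemma free_eval_closed: "free_eval B g f \<in> carrier B"
  unfolding free_eval_def by (rule finsum_closed) (auto simp: add.int_pow_closed)

lemma free_eval_add:
  assumes "f \<in> carrier (free_ring A)" "h \<in> carrier (free_ring A)"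
  shows "free_eval B g (f \<oplus>\<^bsub>free_ring A\<^esub> h) = free_eval B g f \<oplus> free_eval B g h"
proof -
  let ?W = "{w. f w \<noteq> 0} \<union> {w. h w \<noteq> 0}"
  have W: "finite ?W" using assms by (simp add: free_ring_simps)
  have "free_eval B g (f \<oplus>\<^bsub>free_ring A\<^esub> h) = (\<Oplus>w\<in>?W. [(f w + h w)] \<cdot> word_prod B g w)"
    by (subst free_eval_eq_finsum[OF W]) (auto simp: free_ring_simps)
  also have "\<dots> = (\<Oplus>w\<in>?W. [f w] \<cdot> word_prod B g w \<oplus> [h w] \<cdot> word_prod B g w)"
    by (rule finsum_cong') (auto simp: add.int_pow_mult add.int_pow_closed)
  also have "\<dots> = (\<Oplus>w\<in>?W. [f w] \<cdot> word_prod B g w) \<oplus> (\<Oplus>w\<in>?W. [h w] \<cdot> word_prod B g w)"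
    by (rule finsum_addf) (auto simp: add.int_pow_closed)
  also have "\<dots> = free_eval B g f \<oplus> free_eval B g h"
    using free_eval_eq_finsum[OF W, of f] free_eval_eq_finsum[OF W, of h] by auto
  finally show ?thesis .
qed

lemma free_eval_zero: "free_eval B g \<zero>\<^bsub>free_ring A\<^esub> = \<zero>"
  by (simp add: free_ring_simps free_eval_def)

lemma free_eval_free_monom: "free_eval B g (free_monom 1 u) = word_prod B g u"
  by (subst free_eval_eq_finsum[of "{u}"]) (auto simp: free_monom_def)

lemma free_eval_a_inv:
  assumes "x \<in> carrier (free_ring A)"
  shows "free_eval B g (\<ominus>\<^bsub>free_ring A\<^esub> x) = \<ominus> free_eval B g x"
proof -
  interpret F: ring "free_ring A" by (rule ring_free_ring)
  have "free_eval B g (\<ominus>\<^bsub>free_ring A\<^esub> x) \<oplus> free_eval B g x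
      = free_eval B g (\<ominus>\<^bsub>free_ring A\<^esub> x \<oplus>\<^bsub>free_ring A\<^esub> x)"
    using assms by (simp add: free_eval_add)
  also have "\<dots> = \<zero>" using assms by (simp add: F.l_neg free_eval_zero)
  finally have "free_eval B g (\<ominus>\<^bsub>free_ring A\<^esub> x) \<oplus> free_eval B g x = \<zero>" .
  then show ?thesis by (intro minus_equality[symmetric]) (auto simp: free_eval_closed)
qed

lemma free_eval_mult:
  assumes "x \<in> carrier (free_ring A)" "y \<in> carrier (free_ring A)"
  shows "free_eval B g (x \<otimes>\<^bsub>free_ring A\<^esub> y) = free_eval B g x \<otimes> free_eval B g y"
proof -
  interpret F: ring "free_ring A" by (rule ring_free_ring)
  show ?thesis
    using assms
  proof (induction x arbitrary: y rule: free_ring_induct)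
    case (word u)
    have u: "free_monom 1 u \<in> carrier (free_ring A)" using word(1) by (rule free_monom_closed)
    show ?case
      using word(2)
    proof (induction y rule: free_ring_induct)
      case (word v)
      then show ?case
        by (simp add: free_ring_simps word_conv_free_monom free_eval_free_monom word_prod_append)
    qed (use u in \<open>simp_all add: free_eval_zero free_eval_closed free_eval_a_inv free_eval_add
           F.r_minus r_minus F.r_distr r_distr\<close>)
  qed (simp_all add: free_eval_zero free_eval_closed free_eval_a_inv free_eval_add
         F.l_minus l_minus F.l_distr l_distr)
qed

lemma free_eval_ring_hom: "free_eval B g \<in> ring_hom (free_ring A) B"
proof (rule ring_hom_memI)
  show "free_eval B g \<one>\<^bsub>free_ring A\<^esub> = \<one>"
    by (simp add: free_ring_simps free_eval_free_monom word_prod_Nil)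
qed (simp_all add: free_eval_closed free_eval_mult free_eval_add)

lemma free_eval_letter: "free_eval B g (letter a) = g a"
  by (simp add: letter_eq_free_monom free_eval_free_monom word_prod_Cons word_prod_Nil g_closed)

end

section \<open>Rings of left fractions at regular left Ore sets\<close>

lemma Union_eq_const: "(\<And>X. X \<in> F \<Longrightarrow> X = Z) \<Longrightarrow> Z \<in> F \<Longrightarrow> \<Union>F = Z"
  by blast

locale regular_left_ore = ring A for A (structure) +
  fixes T
  assumes T_subset: "T \<subseteq> carrier A"
    and T_one: "\<one> \<in> T"
    and T_mult: "s \<in> T \<Longrightarrow> t \<in> T \<Longrightarrow> s \<otimes> t \<in> T"
    and T_left_ore: "a \<in> carrier A \<Longrightarrow> t \<in> T \<Longrightarrow> \<exists>t'\<in>T. \<exists>a'\<in>carrier A. t' \<otimes> a = a' \<otimes> t"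
    and T_left_regular: "t \<in> T \<Longrightarrow> x \<in> carrier A \<Longrightarrow> t \<otimes> x = \<zero> \<Longrightarrow> x = \<zero>"
    and T_right_regular: "t \<in> T \<Longrightarrow> x \<in> carrier A \<Longrightarrow> x \<otimes> t = \<zero> \<Longrightarrow> x = \<zero>"
begin

lemma T_closed: "t \<in> T \<Longrightarrow> t \<in> carrier A"
  using T_subset by auto

lemma T_left_cancel:
  assumes "t \<in> T" "x \<in> carrier A" "y \<in> carrier A" "t \<otimes> x = t \<otimes> y"
  shows "x = y"
proof -
  have "t \<otimes> (x \<ominus> y) = \<zero>"
    using assms T_closed by (simp add: r_distr r_minus minus_eq r_neg)
  then have "x \<ominus> y = \<zero>" using T_left_regular assms by blast
  then show ?thesis using assms add.inv_equality[of x "\<ominus> y"] by (simp add: minus_eq)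
qed

lemma T_right_cancel:
  assumes "t \<in> T" "x \<in> carrier A" "y \<in> carrier A" "x \<otimes> t = y \<otimes> t"
  shows "x = y"
proof -
  have "(x \<ominus> y) \<otimes> t = \<zero>"
    using assms T_closed by (simp add: l_distr l_minus minus_eq r_neg)
  then have "x \<ominus> y = \<zero>" using T_right_regular assms by blast
  then show ?thesis using assms add.inv_equality[of x "\<ominus> y"] by (simp add: minus_eq)
qed

text \<open>The pair \<open>(s, b)\<close> stands for the left fraction \<open>s\<inverse> b\<close>. Since \<open>T\<close> is regular,
  the usual relation (some \<open>u, u'\<close> with \<open>u s = u' s' \<in> T\<close> and \<open>u b = u' b'\<close>) is equivalent
  to asking \<open>u b = u' b'\<close> for all \<open>u, u'\<close> with \<open>u s = u' s'\<close>, which needs no witnesses.\<close>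

definition frac_rel :: "'a \<Rightarrow> 'a \<Rightarrow> 'a \<Rightarrow> 'a \<Rightarrow> bool" where
  "frac_rel s b s' b' \<longleftrightarrow>
     (\<forall>u\<in>carrier A. \<forall>u'\<in>carrier A. u \<otimes> s = u' \<otimes> s' \<longrightarrow> u \<otimes> b = u' \<otimes> b')"

lemma frac_relD:
  "frac_rel s b s' b' \<Longrightarrow> u \<in> carrier A \<Longrightarrow> u' \<in> carrier A \<Longrightarrow> u \<otimes> s = u' \<otimes> s'
    \<Longrightarrow> u \<otimes> b = u' \<otimes> b'"
  unfolding frac_rel_def by blast

lemma frac_rel_refl: "s \<in> T \<Longrightarrow> frac_rel s b s b"
  unfolding frac_rel_def using T_right_cancel by blast

lemma frac_rel_sym: "frac_rel s b s' b' \<Longrightarrow> frac_rel s' b' s b"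
  unfolding frac_rel_def by (metis (no_types))

lemma frac_rel_trans:
  assumes rel1: "frac_rel s1 b1 s2 b2" and rel2: "frac_rel s2 b2 s3 b3"
    and T: "s1 \<in> T" "s2 \<in> T" "s3 \<in> T" and carrier: "b1 \<in> carrier A" "b3 \<in> carrier A"
  shows "frac_rel s1 b1 s3 b3"
  unfolding frac_rel_def
proof (intro ballI impI)
  fix u u' assume u: "u \<in> carrier A" "u' \<in> carrier A" and eq: "u \<otimes> s1 = u' \<otimes> s3"
  obtain x y where xy: "x \<in> T" "y \<in> carrier A" "x \<otimes> (u \<otimes> s1) = y \<otimes> s2"
    using T_left_ore[of "u \<otimes> s1" s2] u T T_closed by blast
  have x: "x \<in> carrier A" using xy T_closed by blast
  have "(x \<otimes> u) \<otimes> b1 = y \<otimes> b2"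
    by (rule frac_relD[OF rel1]) (use xy x u T T_closed in \<open>simp_all add: m_assoc\<close>)
  also have "\<dots> = (x \<otimes> u') \<otimes> b3"
    by (rule frac_relD[OF rel2]) (use xy x u eq T T_closed in \<open>simp_all add: m_assoc\<close>)
  finally show "u \<otimes> b1 = u' \<otimes> b3"
    using T_left_cancel[OF xy(1)] x u carrier by (simp add: m_assoc)
qed

definition frac :: "'a \<Rightarrow> 'a \<Rightarrow> ('a \<times> 'a) set" where
  "frac s b = {(t, c). t \<in> T \<and> c \<in> carrier A \<and> frac_rel t c s b}"

lemma mem_frac_iff: "(t, c) \<in> frac s b \<longleftrightarrow> t \<in> T \<and> c \<in> carrier A \<and> frac_rel t c s b"
  unfolding frac_def by simp

lemma frac_eq_iff:
  assumes "s \<in> T" "b \<in> carrier A" "s' \<in> T" "b' \<in> carrier A"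
  shows "frac s b = frac s' b' \<longleftrightarrow> frac_rel s b s' b'"
proof
  assume "frac s b = frac s' b'"
  moreover have "(s, b) \<in> frac s b" using assms frac_rel_refl by (simp add: mem_frac_iff)
  ultimately show "frac_rel s b s' b'" by (simp add: mem_frac_iff)
next
  assume rel: "frac_rel s b s' b'"
  have "frac_rel t c s b \<longleftrightarrow> frac_rel t c s' b'" if "t \<in> T" "c \<in> carrier A" for t c
  proof
    assume "frac_rel t c s b"
    then show "frac_rel t c s' b'" by (rule frac_rel_trans[OF _ rel]) (use assms that in simp_all)
  next
    assume "frac_rel t c s' b'"
    then show "frac_rel t c s b"
      by (rule frac_rel_trans[OF _ frac_rel_sym[OF rel]]) (use assms that in simp_all)
  qed
  then show "frac s b = frac s' b'" by (auto simp: mem_frac_iff)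
qed

lemma mem_frac_self: "s \<in> T \<Longrightarrow> b \<in> carrier A \<Longrightarrow> (s, b) \<in> frac s b"
  by (simp add: mem_frac_iff frac_rel_refl)

lemma frac_expand:
  assumes "s \<in> T" "b \<in> carrier A" "u \<in> carrier A" "u \<otimes> s \<in> T"
  shows "frac (u \<otimes> s) (u \<otimes> b) = frac s b"
proof -
  have "frac_rel (u \<otimes> s) (u \<otimes> b) s b"
    unfolding frac_rel_def
  proof (intro ballI impI)
    fix p q assume pq: "p \<in> carrier A" "q \<in> carrier A" "p \<otimes> (u \<otimes> s) = q \<otimes> s"
    have "p \<otimes> u = q"
      by (rule T_right_cancel[OF assms(1)]) (use pq assms T_closed in \<open>simp_all add: m_assoc\<close>)
    then show "p \<otimes> (u \<otimes> b) = q \<otimes> b" using pq assms by (simp add: m_assoc[symmetric])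
  qed
  then show ?thesis using assms by (simp add: frac_eq_iff)
qed

lemma frac_zero: "d \<in> T \<Longrightarrow> frac d \<zero> = frac \<one> \<zero>"
  using frac_expand[of \<one> \<zero> d] T_one T_closed by simp

definition frac_carrier :: "('a \<times> 'a) set set" where
  "frac_carrier = {frac s b | s b. s \<in> T \<and> b \<in> carrier A}"

text \<open>Sum and product of two classes are defined as the union of the classes obtained from all
  representatives and all Ore witnesses; \<open>frac_add_frac\<close> and \<open>frac_mult_frac\<close> show that this
  union is a single class.\<close>

definition frac_add :: "('a \<times> 'a) set \<Rightarrow> ('a \<times> 'a) set \<Rightarrow> ('a \<times> 'a) set" where
  "frac_add X Y = \<Union>{frac (u \<otimes> s) (u \<otimes> b \<oplus> v \<otimes> c) | s b t c u v.
      (s, b) \<in> X \<and> (t, c) \<in> Y \<and> u \<in> carrier A \<and> v \<in> carrier A \<and> u \<otimes> s = v \<otimes> t \<and> u \<otimes> s \<in> T}"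

definition frac_mult :: "('a \<times> 'a) set \<Rightarrow> ('a \<times> 'a) set \<Rightarrow> ('a \<times> 'a) set" where
  "frac_mult X Y = \<Union>{frac (u \<otimes> s) (v \<otimes> c) | s b t c u v.
      (s, b) \<in> X \<and> (t, c) \<in> Y \<and> u \<in> carrier A \<and> v \<in> carrier A \<and> u \<otimes> b = v \<otimes> t \<and> u \<otimes> s \<in> T}"

lemma frac_rel_add:
  assumes rel1: "frac_rel s b s' b'" and rel2: "frac_rel t c t' c'"
    and carrier: "s \<in> T" "s' \<in> T" "t \<in> T" "t' \<in> T"
    and uv: "u \<in> carrier A" "v \<in> carrier A" "u \<otimes> s = v \<otimes> t"
    and uv': "u' \<in> carrier A" "v' \<in> carrier A" "u' \<otimes> s' = v' \<otimes> t'"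
    and num: "b \<in> carrier A" "b' \<in> carrier A" "c \<in> carrier A" "c' \<in> carrier A"
  shows "frac_rel (u \<otimes> s) (u \<otimes> b \<oplus> v \<otimes> c) (u' \<otimes> s') (u' \<otimes> b' \<oplus> v' \<otimes> c')"
  unfolding frac_rel_def
proof (intro ballI impI)
  fix p q assume pq: "p \<in> carrier A" "q \<in> carrier A" "p \<otimes> (u \<otimes> s) = q \<otimes> (u' \<otimes> s')"
  have "(p \<otimes> u) \<otimes> b = (q \<otimes> u') \<otimes> b'"
    by (rule frac_relD[OF rel1]) (use pq uv uv' carrier T_closed in \<open>simp_all add: m_assoc\<close>)
  moreover have "(p \<otimes> v) \<otimes> c = (q \<otimes> v') \<otimes> c'"
    by (rule frac_relD[OF rel2]) (use pq uv uv' carrier T_closed in \<open>simp_all add: m_assoc\<close>)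
  ultimately show "p \<otimes> (u \<otimes> b \<oplus> v \<otimes> c) = q \<otimes> (u' \<otimes> b' \<oplus> v' \<otimes> c')"
    using pq uv uv' num by (simp add: r_distr m_assoc)
qed

lemma frac_rel_mult:
  assumes rel1: "frac_rel s b s' b'" and rel2: "frac_rel t c t' c'"
    and carrier: "s \<in> T" "s' \<in> T" "t \<in> T" "t' \<in> T"
    and uv: "u \<in> carrier A" "v \<in> carrier A" "u \<otimes> b = v \<otimes> t"
    and uv': "u' \<in> carrier A" "v' \<in> carrier A" "u' \<otimes> b' = v' \<otimes> t'"
    and num: "b \<in> carrier A" "b' \<in> carrier A" "c \<in> carrier A" "c' \<in> carrier A"
  shows "frac_rel (u \<otimes> s) (v \<otimes> c) (u' \<otimes> s') (v' \<otimes> c')"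
  unfolding frac_rel_def
proof (intro ballI impI)
  fix p q assume pq: "p \<in> carrier A" "q \<in> carrier A" "p \<otimes> (u \<otimes> s) = q \<otimes> (u' \<otimes> s')"
  have "(p \<otimes> u) \<otimes> b = (q \<otimes> u') \<otimes> b'"
    by (rule frac_relD[OF rel1]) (use pq uv uv' carrier T_closed in \<open>simp_all add: m_assoc\<close>)
  then have "(p \<otimes> v) \<otimes> t = (q \<otimes> v') \<otimes> t'"
    using pq uv uv' num carrier T_closed by (simp add: m_assoc)
  then have "(p \<otimes> v) \<otimes> c = (q \<otimes> v') \<otimes> c'"
    using frac_relD[OF rel2, of "p \<otimes> v" "q \<otimes> v'"] pq uv uv' by simp
  then show "p \<otimes> (v \<otimes> c) = q \<otimes> (v' \<otimes> c')"
    using pq uv uv' num by (simp add: m_assoc)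
qed

lemma frac_add_frac:
  assumes "s \<in> T" "t \<in> T" "b \<in> carrier A" "c \<in> carrier A"
    and "u \<in> carrier A" "v \<in> carrier A" "u \<otimes> s = v \<otimes> t" "u \<otimes> s \<in> T"
  shows "frac_add (frac s b) (frac t c) = frac (u \<otimes> s) (u \<otimes> b \<oplus> v \<otimes> c)"
proof -
  have "frac (u' \<otimes> s') (u' \<otimes> b' \<oplus> v' \<otimes> c') = frac (u \<otimes> s) (u \<otimes> b \<oplus> v \<otimes> c)"
    if "(s', b') \<in> frac s b" "(t', c') \<in> frac t c" "u' \<in> carrier A" "v' \<in> carrier A"
      "u' \<otimes> s' = v' \<otimes> t'" "u' \<otimes> s' \<in> T" for s' b' t' c' u' v'
  proof -
    have "frac_rel (u' \<otimes> s') (u' \<otimes> b' \<oplus> v' \<otimes> c') (u \<otimes> s) (u \<otimes> b \<oplus> v \<otimes> c)"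
      by (rule frac_rel_add) (use that assms in \<open>simp_all add: mem_frac_iff\<close>)
    then show ?thesis
      by (subst frac_eq_iff) (use that assms T_closed in \<open>simp_all add: mem_frac_iff\<close>)
  qed
  moreover have "frac (u \<otimes> s) (u \<otimes> b \<oplus> v \<otimes> c)
    \<in> {frac (u' \<otimes> s') (u' \<otimes> b' \<oplus> v' \<otimes> c') | s' b' t' c' u' v'.
      (s', b') \<in> frac s b \<and> (t', c') \<in> frac t c \<and> u' \<in> carrier A \<and> v' \<in> carrier A
      \<and> u' \<otimes> s' = v' \<otimes> t' \<and> u' \<otimes> s' \<in> T}"
    by (rule CollectI, rule exI[of _ s], rule exI[of _ b], rule exI[of _ t], rule exI[of _ c],
        rule exI[of _ u], rule exI[of _ v]) (use assms mem_frac_self in simp)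
  ultimately show ?thesis
    unfolding frac_add_def by (intro Union_eq_const) blast+
qed

lemma frac_mult_frac:
  assumes "s \<in> T" "t \<in> T" "b \<in> carrier A" "c \<in> carrier A"
    and "u \<in> carrier A" "v \<in> carrier A" "u \<otimes> b = v \<otimes> t" "u \<otimes> s \<in> T"
  shows "frac_mult (frac s b) (frac t c) = frac (u \<otimes> s) (v \<otimes> c)"
proof -
  have "frac (u' \<otimes> s') (v' \<otimes> c') = frac (u \<otimes> s) (v \<otimes> c)"
    if "(s', b') \<in> frac s b" "(t', c') \<in> frac t c" "u' \<in> carrier A" "v' \<in> carrier A"
      "u' \<otimes> b' = v' \<otimes> t'" "u' \<otimes> s' \<in> T" for s' b' t' c' u' v'
  proof -
    have "frac_rel (u' \<otimes> s') (v' \<otimes> c') (u \<otimes> s) (v \<otimes> c)"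
      by (rule frac_rel_mult[where b = b' and b' = b])
        (use that assms in \<open>simp_all add: mem_frac_iff\<close>)
    then show ?thesis
      by (subst frac_eq_iff) (use that assms T_closed in \<open>simp_all add: mem_frac_iff\<close>)
  qed
  moreover have "frac (u \<otimes> s) (v \<otimes> c) \<in> {frac (u' \<otimes> s') (v' \<otimes> c') | s' b' t' c' u' v'.
      (s', b') \<in> frac s b \<and> (t', c') \<in> frac t c \<and> u' \<in> carrier A \<and> v' \<in> carrier A
      \<and> u' \<otimes> b' = v' \<otimes> t' \<and> u' \<otimes> s' \<in> T}"
    by (rule CollectI, rule exI[of _ s], rule exI[of _ b], rule exI[of _ t], rule exI[of _ c],
        rule exI[of _ u], rule exI[of _ v]) (use assms mem_frac_self in simp)
  ultimately show ?thesis
    unfolding frac_mult_def by (intro Union_eq_const) blast+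
qed

lemma frac_carrierE:
  assumes "X \<in> frac_carrier"
  obtains s b where "s \<in> T" "b \<in> carrier A" "X = frac s b"
  using assms unfolding frac_carrier_def by blast

lemma frac_in_carrier [simp]: "s \<in> T \<Longrightarrow> b \<in> carrier A \<Longrightarrow> frac s b \<in> frac_carrier"
  unfolding frac_carrier_def by blast

lemma frac_common_denom:
  assumes "X \<in> frac_carrier" "Y \<in> frac_carrier"
  obtains d b c where "d \<in> T" "b \<in> carrier A" "c \<in> carrier A" "X = frac d b" "Y = frac d c"
proof -
  obtain s b where sb: "s \<in> T" "b \<in> carrier A" "X = frac s b" using assms(1) by (rule frac_carrierE)
  obtain t c where tc: "t \<in> T" "c \<in> carrier A" "Y = frac t c" using assms(2) by (rule frac_carrierE)
  obtain u v where uv: "u \<in> T" "v \<in> carrier A" "u \<otimes> s = v \<otimes> t"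
    using T_left_ore[of s t] sb tc T_closed by auto
  have us: "u \<otimes> s \<in> T" using T_mult uv sb by blast
  have X: "X = frac (u \<otimes> s) (u \<otimes> b)" using frac_expand[of s b u] sb uv us T_closed by simp
  have Y: "Y = frac (u \<otimes> s) (v \<otimes> c)" using frac_expand[of t c v] tc uv us by simp
  show ?thesis by (rule that[OF us _ _ X Y]) (use uv sb tc T_closed in simp_all)
qed

lemma frac_add_same_denom:
  "d \<in> T \<Longrightarrow> b \<in> carrier A \<Longrightarrow> c \<in> carrier A \<Longrightarrow> frac_add (frac d b) (frac d c) = frac d (b \<oplus> c)"
  using frac_add_frac[of d d b c \<one> \<one>] T_closed by simp

lemma frac_add_closed: "X \<in> frac_carrier \<Longrightarrow> Y \<in> frac_carrier \<Longrightarrow> frac_add X Y \<in> frac_carrier"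
  by (erule frac_common_denom, assumption) (simp add: frac_add_same_denom)

lemma frac_mult_closed:
  assumes "X \<in> frac_carrier" "Y \<in> frac_carrier"
  shows "frac_mult X Y \<in> frac_carrier"
proof -
  obtain s b where sb: "s \<in> T" "b \<in> carrier A" "X = frac s b" using assms(1) by (rule frac_carrierE)
  obtain t c where tc: "t \<in> T" "c \<in> carrier A" "Y = frac t c" using assms(2) by (rule frac_carrierE)
  obtain u v where uv: "u \<in> T" "v \<in> carrier A" "u \<otimes> b = v \<otimes> t"
    using T_left_ore[of b t] sb tc by auto
  show ?thesis using frac_mult_frac[of s t b c u v] sb tc uv T_mult T_closed by simp
qed

lemma frac_mult_assoc:
  assumes X: "X \<in> frac_carrier" and Y: "Y \<in> frac_carrier" and Z: "Z \<in> frac_carrier"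
  shows "frac_mult (frac_mult X Y) Z = frac_mult X (frac_mult Y Z)"
proof -
  obtain s1 b1 where 1: "s1 \<in> T" "b1 \<in> carrier A" "X = frac s1 b1" using X by (rule frac_carrierE)
  obtain s2 b2 where 2: "s2 \<in> T" "b2 \<in> carrier A" "Y = frac s2 b2" using Y by (rule frac_carrierE)
  obtain s3 b3 where 3: "s3 \<in> T" "b3 \<in> carrier A" "Z = frac s3 b3" using Z by (rule frac_carrierE)
  have s: "s1 \<in> carrier A" "s2 \<in> carrier A" "s3 \<in> carrier A" using 1 2 3 T_closed by auto
  obtain w z where wz: "w \<in> T" "z \<in> carrier A" "w \<otimes> b2 = z \<otimes> s3"
    using T_left_ore[of b2 s3] 2 3 by auto
  have w: "w \<in> carrier A" "w \<otimes> s2 \<in> T" using wz 2 T_closed T_mult by auto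
  obtain u v where uv: "u \<in> T" "v \<in> carrier A" "u \<otimes> b1 = v \<otimes> (w \<otimes> s2)"
    using T_left_ore[of b1 "w \<otimes> s2"] 1 w by auto
  have u: "u \<in> carrier A" "u \<otimes> s1 \<in> T" using uv 1 T_closed T_mult by auto
  have "frac_mult Y Z = frac (w \<otimes> s2) (z \<otimes> b3)"
    using frac_mult_frac[of s2 s3 b2 b3 w z] 2 3 wz w by simp
  then have right: "frac_mult X (frac_mult Y Z) = frac (u \<otimes> s1) (v \<otimes> (z \<otimes> b3))"
    using frac_mult_frac[of s1 "w \<otimes> s2" b1 "z \<otimes> b3" u v] 1 3 uv w wz u by simp
  have "frac_mult X Y = frac (u \<otimes> s1) ((v \<otimes> w) \<otimes> b2)"
    using frac_mult_frac[of s1 s2 b1 b2 u "v \<otimes> w"] 1 2 uv w u s by (simp add: m_assoc)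
  then have "frac_mult (frac_mult X Y) Z = frac (\<one> \<otimes> (u \<otimes> s1)) ((v \<otimes> z) \<otimes> b3)"
    using frac_mult_frac[of "u \<otimes> s1" s3 "(v \<otimes> w) \<otimes> b2" b3 \<one> "v \<otimes> z"] 2 3 uv wz w u s
    by (simp add: m_assoc)
  then show ?thesis using right u s uv wz 3 by (simp add: m_assoc)
qed

lemma frac_mult_add_distrib_right:
  assumes X: "X \<in> frac_carrier" and Y: "Y \<in> frac_carrier" and Z: "Z \<in> frac_carrier"
  shows "frac_mult (frac_add X Y) Z = frac_add (frac_mult X Z) (frac_mult Y Z)"
proof -
  obtain s b1 b2 where sb: "s \<in> T" "b1 \<in> carrier A" "b2 \<in> carrier A" "X = frac s b1" "Y = frac s b2"
    using X Y by (rule frac_common_denom)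
  obtain t c where tc: "t \<in> T" "c \<in> carrier A" "Z = frac t c" using Z by (rule frac_carrierE)
  obtain u1 v1 where 1: "u1 \<in> T" "v1 \<in> carrier A" "u1 \<otimes> b1 = v1 \<otimes> t"
    using T_left_ore[of b1 t] sb tc by auto
  have u1: "u1 \<in> carrier A" using 1 T_closed by auto
  obtain u2 v2 where 2: "u2 \<in> T" "v2 \<in> carrier A" "u2 \<otimes> (u1 \<otimes> b2) = v2 \<otimes> t"
    using T_left_ore[of "u1 \<otimes> b2" t] sb tc u1 by auto
  have u2: "u2 \<in> carrier A" using 2 T_closed by auto
  have U: "(u2 \<otimes> u1) \<otimes> s \<in> T" using T_mult 1 2 sb by blast
  have e1: "(u2 \<otimes> u1) \<otimes> b1 = (u2 \<otimes> v1) \<otimes> t"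
    using 1 u1 u2 sb tc T_closed by (simp add: m_assoc)
  have e2: "(u2 \<otimes> u1) \<otimes> b2 = v2 \<otimes> t"
    using 2 u1 u2 sb tc T_closed by (simp add: m_assoc)
  have "(u2 \<otimes> u1) \<otimes> (b1 \<oplus> b2) = (u2 \<otimes> v1 \<oplus> v2) \<otimes> t"
    using e1 e2 1 2 u1 u2 sb tc T_closed by (simp add: r_distr l_distr)
  then have "frac_mult (frac_add X Y) Z = frac ((u2 \<otimes> u1) \<otimes> s) ((u2 \<otimes> v1 \<oplus> v2) \<otimes> c)"
    using sb tc 1 2 u1 u2 U by (simp add: frac_add_same_denom frac_mult_frac)
  moreover have "frac_mult X Z = frac ((u2 \<otimes> u1) \<otimes> s) ((u2 \<otimes> v1) \<otimes> c)"
    using sb tc 1 2 u1 u2 U e1 by (simp add: frac_mult_frac)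
  moreover have "frac_mult Y Z = frac ((u2 \<otimes> u1) \<otimes> s) (v2 \<otimes> c)"
    using sb tc 2 u1 u2 U e2 by (simp add: frac_mult_frac)
  ultimately show ?thesis using U 1 2 u2 tc by (simp add: frac_add_same_denom l_distr)
qed

lemma frac_mult_add_distrib_left:
  assumes X: "X \<in> frac_carrier" and Y: "Y \<in> frac_carrier" and Z: "Z \<in> frac_carrier"
  shows "frac_mult Z (frac_add X Y) = frac_add (frac_mult Z X) (frac_mult Z Y)"
proof -
  obtain s b1 b2 where sb: "s \<in> T" "b1 \<in> carrier A" "b2 \<in> carrier A" "X = frac s b1" "Y = frac s b2"
    using X Y by (rule frac_common_denom)
  obtain t c where tc: "t \<in> T" "c \<in> carrier A" "Z = frac t c" using Z by (rule frac_carrierE)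
  obtain u v where uv: "u \<in> T" "v \<in> carrier A" "u \<otimes> c = v \<otimes> s"
    using T_left_ore[of c s] sb tc by auto
  have u: "u \<in> carrier A" "u \<otimes> t \<in> T" using uv tc T_closed T_mult by auto
  show ?thesis
    using sb tc uv u by (simp add: frac_add_same_denom frac_mult_frac r_distr)
qed

definition frac_ring :: "('a \<times> 'a) set ring" where
  "frac_ring = \<lparr>carrier = frac_carrier, mult = frac_mult, one = frac \<one> \<one>, zero = frac \<one> \<zero>,
     add = frac_add\<rparr>"

lemma frac_ring_simps [simp]:
  "carrier frac_ring = frac_carrier" "mult frac_ring = frac_mult" "one frac_ring = frac \<one> \<one>"
  "zero frac_ring = frac \<one> \<zero>" "add frac_ring = frac_add"
  unfolding frac_ring_def by simp_all

lemma abelian_group_frac_ring: "abelian_group frac_ring"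
proof (rule abelian_groupI, unfold frac_ring_simps)
  fix X Y Z assume X: "X \<in> frac_carrier" and Y: "Y \<in> frac_carrier" and Z: "Z \<in> frac_carrier"
  obtain d b c where dbc: "d \<in> T" "b \<in> carrier A" "c \<in> carrier A" "X = frac d b" "Y = frac d c"
    using X Y by (rule frac_common_denom)
  obtain t e where te: "t \<in> T" "e \<in> carrier A" "Z = frac t e" using Z by (rule frac_carrierE)
  obtain u v where uv: "u \<in> T" "v \<in> carrier A" "u \<otimes> d = v \<otimes> t"
    using T_left_ore[of d t] dbc te T_closed by auto
  have u: "u \<in> carrier A" "u \<otimes> d \<in> T" using T_closed[OF uv(1)] T_mult[OF uv(1) dbc(1)] by auto
  have "X = frac (u \<otimes> d) (u \<otimes> b)" "Y = frac (u \<otimes> d) (u \<otimes> c)" "Z = frac (u \<otimes> d) (v \<otimes> e)"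
    using frac_expand[of d b u] frac_expand[of d c u] frac_expand[of t e v] dbc te uv u by simp_all
  then show "frac_add (frac_add X Y) Z = frac_add X (frac_add Y Z)"
    using uv dbc te u by (simp add: frac_add_same_denom a_assoc)
next
  fix X Y assume "X \<in> frac_carrier" "Y \<in> frac_carrier"
  then obtain d b c where "d \<in> T" "b \<in> carrier A" "c \<in> carrier A" "X = frac d b" "Y = frac d c"
    by (rule frac_common_denom)
  then show "frac_add X Y = frac_add Y X" by (simp add: frac_add_same_denom a_comm)
next
  fix X assume "X \<in> frac_carrier"
  then obtain s b where sb: "s \<in> T" "b \<in> carrier A" "X = frac s b" by (rule frac_carrierE)
  then have "frac_add (frac s \<zero>) X = X" by (simp add: frac_add_same_denom)
  moreover have "frac_add (frac s (\<ominus> b)) X = frac \<one> \<zero>"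
    using sb frac_zero[of s] by (simp add: frac_add_same_denom l_neg)
  ultimately show "frac_add (frac \<one> \<zero>) X = X" "\<exists>Y\<in>frac_carrier. frac_add Y X = frac \<one> \<zero>"
    using sb frac_zero[of s] by auto
qed (use T_one frac_add_closed in auto)

lemma ring_frac_ring: "ring frac_ring"
proof (rule ringI)
  show "monoid frac_ring"
  proof (rule monoidI, unfold frac_ring_simps)
    fix X assume "X \<in> frac_carrier"
    then obtain s b where sb: "s \<in> T" "b \<in> carrier A" "X = frac s b" by (rule frac_carrierE)
    then show "frac_mult (frac \<one> \<one>) X = X"
      using frac_mult_frac[of \<one> s \<one> b s \<one>] T_one T_closed by simp
    show "frac_mult X (frac \<one> \<one>) = X"
      using sb frac_mult_frac[of s \<one> b \<one> \<one> b] T_one T_closed by simp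
  qed (use T_one frac_mult_closed frac_mult_assoc in auto)
qed (use abelian_group_frac_ring frac_mult_add_distrib_right frac_mult_add_distrib_left in auto)

definition frac_map :: "'a \<Rightarrow> ('a \<times> 'a) set" where
  "frac_map a = frac \<one> a"

lemma frac_map_ring_hom: "frac_map \<in> ring_hom A frac_ring"
proof (rule ring_hom_memI, unfold frac_ring_simps frac_map_def)
  fix x y assume "x \<in> carrier A" "y \<in> carrier A"
  then show "frac \<one> (x \<otimes> y) = frac_mult (frac \<one> x) (frac \<one> y)"
    "frac \<one> (x \<oplus> y) = frac_add (frac \<one> x) (frac \<one> y)"
    using frac_mult_frac[of \<one> \<one> x y \<one> x] frac_add_same_denom[of \<one> x y] T_one T_closed by simp_all
qed (use T_one in simp_all)

lemma frac_map_unit: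
  assumes t: "t \<in> T"
  shows "frac_map t \<in> Units frac_ring" "inv\<^bsub>frac_ring\<^esub> (frac_map t) = frac t \<one>"
proof -
  interpret Q: ring frac_ring by (rule ring_frac_ring)
  have carrier: "frac_map t \<in> frac_carrier" "frac t \<one> \<in> frac_carrier"
    unfolding frac_map_def using t T_one T_closed by auto
  have r_inv: "frac_mult (frac_map t) (frac t \<one>) = frac \<one> \<one>"
    unfolding frac_map_def using frac_mult_frac[of \<one> t t \<one> \<one> \<one>] t T_closed T_one by simp
  have "frac_mult (frac t \<one>) (frac_map t) = frac t t"
    unfolding frac_map_def using frac_mult_frac[of t \<one> \<one> t \<one> \<one>] t T_closed T_one by simp
  also have "\<dots> = frac \<one> \<one>" using frac_expand[of \<one> \<one> t] t T_closed T_one by simp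
  finally have l_inv: "frac_mult (frac t \<one>) (frac_map t) = frac \<one> \<one>" .
  show "frac_map t \<in> Units frac_ring" unfolding Units_def using carrier r_inv l_inv by auto
  show "inv\<^bsub>frac_ring\<^esub> (frac_map t) = frac t \<one>"
    using Q.inv_unique'[of "frac_map t" "frac t \<one>"] carrier r_inv l_inv by simp
qed

theorem left_ring_of_fractions_frac_ring: "left_ring_of_fractions A T frac_ring frac_map"
  unfolding left_ring_of_fractions_def
proof (intro conjI ballI)
  show "ring frac_ring" by (rule ring_frac_ring)
  show "frac_map \<in> ring_hom A frac_ring" by (rule frac_map_ring_hom)
next
  fix t assume "t \<in> T"
  then show "frac_map t \<in> Units frac_ring" by (rule frac_map_unit)
next
  fix q assume "q \<in> carrier frac_ring"
  then obtain t a where ta: "t \<in> T" "a \<in> carrier A" "q = frac t a" by (auto elim: frac_carrierE)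
  then have "q = frac_mult (frac t \<one>) (frac_map a)"
    unfolding frac_map_def using frac_mult_frac[of t \<one> \<one> a \<one> \<one>] T_one T_closed by simp
  then show "\<exists>t\<in>T. \<exists>a\<in>carrier A. q = inv\<^bsub>frac_ring\<^esub> (frac_map t) \<otimes>\<^bsub>frac_ring\<^esub> frac_map a"
    using ta frac_map_unit(2) by auto
next
  fix a assume a: "a \<in> carrier A"
  have "frac_map a = frac \<one> \<zero> \<longleftrightarrow> a = \<zero>"
    unfolding frac_map_def using a T_one
    by (auto simp: frac_eq_iff frac_rel_def dest: bspec[of _ _ \<one>])
  moreover have "(\<exists>t\<in>T. t \<otimes> a = \<zero>) \<longleftrightarrow> a = \<zero>"
    using a T_left_regular T_one by (auto intro: bexI[of _ \<one>])
  ultimately show "frac_map a = \<zero>\<^bsub>frac_ring\<^esub> \<longleftrightarrow> (\<exists>t\<in>T. t \<otimes> a = \<zero>)" by simp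
qed

end

lemma left_ring_of_fractionsD:
  assumes "left_ring_of_fractions A T Q \<phi>"
  shows "ring Q" "\<phi> \<in> ring_hom A Q" "\<And>t. t \<in> T \<Longrightarrow> \<phi> t \<in> Units Q"
    "\<And>q. q \<in> carrier Q \<Longrightarrow> \<exists>t\<in>T. \<exists>a\<in>carrier A. q = inv\<^bsub>Q\<^esub> (\<phi> t) \<otimes>\<^bsub>Q\<^esub> \<phi> a"
    "\<And>a. a \<in> carrier A \<Longrightarrow> \<phi> a = \<zero>\<^bsub>Q\<^esub> \<longleftrightarrow> (\<exists>t\<in>T. t \<otimes>\<^bsub>A\<^esub> a = \<zero>\<^bsub>A\<^esub>)"
proof -
  note lrf = assms[unfolded left_ring_of_fractions_def]
  show "ring Q" using lrf by (elim conjE)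
  show "\<phi> \<in> ring_hom A Q" using lrf by (elim conjE)
  show "\<phi> t \<in> Units Q" if "t \<in> T" for t
    using lrf that by (elim conjE) (erule bspec)
  show "\<exists>t\<in>T. \<exists>a\<in>carrier A. q = inv\<^bsub>Q\<^esub> (\<phi> t) \<otimes>\<^bsub>Q\<^esub> \<phi> a" if "q \<in> carrier Q" for q
    using lrf that by (elim conjE) (erule bspec)
  show "\<phi> a = \<zero>\<^bsub>Q\<^esub> \<longleftrightarrow> (\<exists>t\<in>T. t \<otimes>\<^bsub>A\<^esub> a = \<zero>\<^bsub>A\<^esub>)" if "a \<in> carrier A" for a
    using lrf that by (elim conjE) (erule bspec)
qed

lemma (in monoid) Units_inv_mult:
  assumes "x \<in> Units G" "y \<in> Units G"
  shows "inv (x \<otimes> y) = inv y \<otimes> inv x"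
proof (rule inv_unique'[symmetric])
  have "x \<otimes> y \<otimes> (inv y \<otimes> inv x) = x \<otimes> (y \<otimes> inv y) \<otimes> inv x"
    using assms by (simp only: m_assoc Units_closed Units_inv_closed m_closed)
  then show "x \<otimes> y \<otimes> (inv y \<otimes> inv x) = \<one>" using assms by (simp add: Units_closed)
  have "inv y \<otimes> inv x \<otimes> (x \<otimes> y) = inv y \<otimes> (inv x \<otimes> x) \<otimes> y"
    using assms by (simp only: m_assoc Units_closed Units_inv_closed m_closed)
  then show "inv y \<otimes> inv x \<otimes> (x \<otimes> y) = \<one>" using assms by (simp add: Units_closed)
qed (use assms in auto)

lemma (in monoid) mult_inv_eq_inv_mult:
  assumes "u \<in> Units G" "t \<in> Units G" "r \<in> carrier G" "v \<in> carrier G" "u \<otimes> r = v \<otimes> t"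
  shows "r \<otimes> inv t = inv u \<otimes> v"
proof -
  have "r \<otimes> inv t = inv u \<otimes> (u \<otimes> r) \<otimes> inv t"
    using assms(1-3) by (simp add: m_assoc[symmetric] Units_closed)
  also have "\<dots> = inv u \<otimes> (v \<otimes> t) \<otimes> inv t" using assms(5) by simp
  also have "\<dots> = inv u \<otimes> v" using assms(1,2,4) by (simp add: m_assoc Units_closed)
  finally show ?thesis .
qed

lemma (in monoid) inv_mult_eq_mult_inv:
  assumes "u \<in> Units G" "t \<in> Units G" "r \<in> carrier G" "v \<in> carrier G" "r \<otimes> u = t \<otimes> v"
  shows "inv t \<otimes> r = v \<otimes> inv u"
proof -
  have "inv t \<otimes> r = inv t \<otimes> (r \<otimes> u) \<otimes> inv u"
    using assms(1-3) by (simp add: m_assoc Units_closed)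
  also have "\<dots> = inv t \<otimes> (t \<otimes> v) \<otimes> inv u" using assms(5) by simp
  also have "\<dots> = v \<otimes> inv u" using assms(1,2,4) by (simp add: m_assoc[symmetric] Units_closed)
  finally show ?thesis .
qed

lemma (in ring_hom_ring) FactRing_lift:
  assumes "ideal I R" "I \<subseteq> a_kernel R S h"
  obtains \<chi> where "\<chi> \<in> ring_hom (R Quot I) S" "\<And>x. x \<in> carrier R \<Longrightarrow> \<chi> (I +> x) = h x"
proof -
  interpret I: ideal I R by fact
  define \<chi> where "\<chi> X = h (SOME x. x \<in> X)" for X
  have \<chi>: "\<chi> (I +> x) = h x" if x: "x \<in> carrier R" for x
  proof -
    have "(SOME y. y \<in> I +> x) \<in> I +> x" using I.a_rcos_self[OF x] by (rule someI)
    then obtain i where "i \<in> I" "(SOME y. y \<in> I +> x) = i \<oplus> x"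
      unfolding a_r_coset_def' by blast
    moreover have "h i = \<zero>\<^bsub>S\<^esub>" using \<open>i \<in> I\<close> assms(2) unfolding a_kernel_def' by blast
    ultimately show ?thesis unfolding \<chi>_def using x I.a_Hcarr by simp
  qed
  have hom: "\<chi> \<in> ring_hom (R Quot I) S"
  proof (rule ring_hom_memI)
    fix X Y assume "X \<in> carrier (R Quot I)" "Y \<in> carrier (R Quot I)"
    then obtain x y where "x \<in> carrier R" "X = I +> x" "y \<in> carrier R" "Y = I +> y"
      by (auto simp: FactRing_def A_RCOSETS_def')
    then show "\<chi> (X \<otimes>\<^bsub>R Quot I\<^esub> Y) = \<chi> X \<otimes>\<^bsub>S\<^esub> \<chi> Y" "\<chi> (X \<oplus>\<^bsub>R Quot I\<^esub> Y) = \<chi> X \<oplus>\<^bsub>S\<^esub> \<chi> Y"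
      "\<chi> X \<in> carrier S"
      using \<chi> by (simp_all add: FactRing_def I.rcoset_mult_add I.a_rcos_sum)
  qed (simp add: FactRing_def \<chi>)
  show thesis by (rule that[OF hom \<chi>])
qed

section \<open>The ring \<open>R\<langle>S\<inverse>\<rangle>\<close>\<close>

lemma image_setcompr_pairs:
  "(\<lambda>(f, h). F f h) ` {(a x y, b x y) | x y. P x y} = {F (a x y) (b x y) | x y. P x y}"
  "(\<lambda>(f, h). F f h) ` {(c z, d z) | z. Q z} = {F (c z) (d z) | z. Q z}"
  by auto

lemma setcompr_cong2:
  "(\<And>x y. P x y \<Longrightarrow> F x y = G x y) \<Longrightarrow> {F x y | x y. P x y} = {G x y | x y. P x y}"
  by (rule Collect_cong) metis

lemma setcompr_cong1: "(\<And>x. P x \<Longrightarrow> F x = G x) \<Longrightarrow> {F x | x. P x} = {G x | x. P x}"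
  by (rule Collect_cong) metis

definition loc_relators ::
  "('a, 'm) ring_scheme \<Rightarrow> 'a set \<Rightarrow> ((('a + 'a) list \<Rightarrow> int) \<times> (('a + 'a) list \<Rightarrow> int)) set"
where
  "loc_relators R S =
     {(letter (Inl (r \<oplus>\<^bsub>R\<^esub> r')), letter (Inl r) \<oplus>\<^bsub>loc_free R S\<^esub> letter (Inl r'))
        | r r'. r \<in> carrier R \<and> r' \<in> carrier R}
   \<union> {(letter (Inl (r \<otimes>\<^bsub>R\<^esub> r')), letter (Inl r) \<otimes>\<^bsub>loc_free R S\<^esub> letter (Inl r'))
        | r r'. r \<in> carrier R \<and> r' \<in> carrier R}
   \<union> {(letter (Inl \<one>\<^bsub>R\<^esub>), \<one>\<^bsub>loc_free R S\<^esub>)}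
   \<union> {(letter (Inl s) \<otimes>\<^bsub>loc_free R S\<^esub> letter (Inr s), \<one>\<^bsub>loc_free R S\<^esub>) | s. s \<in> S}
   \<union> {(letter (Inr s) \<otimes>\<^bsub>loc_free R S\<^esub> letter (Inl s), \<one>\<^bsub>loc_free R S\<^esub>) | s. s \<in> S}"

locale universal_localization = ring R for R (structure) +
  fixes S
  assumes S_subset: "S \<subseteq> carrier R"
begin

abbreviation RX where "RX \<equiv> loc_free R S"
abbreviation IS where "IS \<equiv> loc_ideal R S"
abbreviation RS where "RS \<equiv> loc_ring R S"
abbreviation \<iota> where "\<iota> \<equiv> loc_map R S"
abbreviation \<xi> where "\<xi> \<equiv> loc_x R S"

sublocale RX: ring RX
  unfolding loc_free_def by (rule ring_free_ring)

lemma letter_Inl_closed: "r \<in> carrier R \<Longrightarrow> letter (Inl r) \<in> carrier RX"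
  unfolding loc_free_def letter_eq_free_monom by (rule free_monom_closed) (auto simp: loc_alph_def)

lemma letter_Inr_closed: "s \<in> S \<Longrightarrow> letter (Inr s) \<in> carrier RX"
  unfolding loc_free_def letter_eq_free_monom by (rule free_monom_closed) (auto simp: loc_alph_def)

lemma RX_minus: "f \<in> carrier RX \<Longrightarrow> h \<in> carrier RX \<Longrightarrow> f \<ominus>\<^bsub>RX\<^esub> h = (\<lambda>w. f w - h w)"
  unfolding loc_free_def a_minus_def by (simp add: a_inv_free_ring free_ring_simps)

lemma loc_relators_closed: "(f, h) \<in> loc_relators R S \<Longrightarrow> f \<in> carrier RX \<and> h \<in> carrier RX"
  unfolding loc_relators_def using letter_Inl_closed letter_Inr_closed S_subset by auto

lemma loc_rels_eq: "loc_rels R S = (\<lambda>(f, h). f \<ominus>\<^bsub>RX\<^esub> h) ` loc_relators R S"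
proof -
  have minus: "(\<lambda>w. f w - h w) = f \<ominus>\<^bsub>RX\<^esub> h" if "f \<in> carrier RX" "h \<in> carrier RX" for f h
    using that by (simp add: RX_minus)
  have add: "(\<lambda>w. letter (Inl (r \<oplus> r')) w - letter (Inl r) w - letter (Inl r') w)
      = letter (Inl (r \<oplus> r')) \<ominus>\<^bsub>RX\<^esub> (letter (Inl r) \<oplus>\<^bsub>RX\<^esub> letter (Inl r'))"
    if "r \<in> carrier R" "r' \<in> carrier R" for r r'
  proof -
    have "letter (Inl r) \<oplus>\<^bsub>RX\<^esub> letter (Inl r') \<in> carrier RX"
      using that letter_Inl_closed by simp
    then show ?thesis
      using that letter_Inl_closed
      by (simp add: RX_minus) (simp add: fun_eq_iff loc_free_def free_ring_simps)
  qed
  show ?thesis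
    unfolding loc_rels_def loc_relators_def image_Un image_insert image_empty prod.case
      image_setcompr_pairs
    by (intro arg_cong2[where f = "(\<union>)"] setcompr_cong2 setcompr_cong1)
      (use letter_Inl_closed letter_Inr_closed S_subset in \<open>auto simp: add minus\<close>)
qed

lemma loc_rels_closed: "loc_rels R S \<subseteq> carrier RX"
  unfolding loc_rels_eq using loc_relators_closed by auto

lemma loc_rels_subset_kernel:
  assumes "ring Q" "E \<in> ring_hom RX Q"
    and relators: "\<And>f h. (f, h) \<in> loc_relators R S \<Longrightarrow> E f = E h"
  shows "loc_rels R S \<subseteq> a_kernel RX Q E"
proof
  interpret Q: ring Q by fact
  interpret E: ring_hom_ring RX Q E by (intro ring_hom_ringI2 RX.ring_axioms assms(1,2))
  fix z assume "z \<in> loc_rels R S"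
  then obtain f h where fh: "(f, h) \<in> loc_relators R S" "z = f \<ominus>\<^bsub>RX\<^esub> h"
    unfolding loc_rels_eq by auto
  have "E z = E h \<ominus>\<^bsub>Q\<^esub> E h"
    using fh relators loc_relators_closed[OF fh(1)] by (simp add: RX.minus_eq Q.minus_eq)
  then show "z \<in> a_kernel RX Q E"
    using fh loc_relators_closed[OF fh(1)] unfolding a_kernel_def'
    by (simp add: Q.r_neg Q.minus_eq RX.minus_closed)
qed

lemma ideal_loc_ideal: "ideal IS RX"
  unfolding loc_ideal_def using loc_rels_closed by (rule RX.genideal_ideal)

sublocale IS: ideal IS RX
  by (rule ideal_loc_ideal)

sublocale RS: ring RS
  unfolding loc_ring_def by (rule IS.quotient_is_ring)

sublocale proj: ring_hom_ring RX RS "\<lambda>f. IS +>\<^bsub>RX\<^esub> f"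
  unfolding loc_ring_def by (rule IS.rcos_ring_hom_ring)

lemma loc_ring_carrier: "carrier RS = (\<lambda>f. IS +>\<^bsub>RX\<^esub> f) ` carrier RX"
  unfolding loc_ring_def by (auto simp: FactRing_def A_RCOSETS_def')

lemma relator_cosets_eq:
  assumes "(f, h) \<in> loc_relators R S"
  shows "IS +>\<^bsub>RX\<^esub> f = IS +>\<^bsub>RX\<^esub> h"
proof -
  have carrier: "f \<in> carrier RX" "h \<in> carrier RX" using loc_relators_closed[OF assms] by auto
  have "f \<ominus>\<^bsub>RX\<^esub> h \<in> loc_rels R S"
    unfolding loc_rels_eq by (rule rev_image_eqI[OF assms]) simp
  then have "f \<ominus>\<^bsub>RX\<^esub> h \<in> IS"
    using RX.genideal_self[OF loc_rels_closed] unfolding loc_ideal_def by blast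
  then have "f \<in> IS +>\<^bsub>RX\<^esub> h"
    using IS.a_rcos_module_minus[OF RX.ring_axioms carrier(2,1)] by simp
  then have "IS +>\<^bsub>RX\<^esub> h = IS +>\<^bsub>RX\<^esub> f" by (rule IS.a_repr_independence'[OF _ carrier(2)])
  then show ?thesis by simp
qed

lemma loc_map_closed: "r \<in> carrier R \<Longrightarrow> \<iota> r \<in> carrier RS"
  unfolding loc_map_def using letter_Inl_closed by simp

lemma loc_x_closed: "s \<in> S \<Longrightarrow> \<xi> s \<in> carrier RS"
  unfolding loc_x_def using letter_Inr_closed by simp

lemma loc_map_ring_hom: "\<iota> \<in> ring_hom R RS"
proof (rule ring_hom_memI)
  fix r r' assume rr: "r \<in> carrier R" "r' \<in> carrier R"
  have "(letter (Inl (r \<otimes> r')), letter (Inl r) \<otimes>\<^bsub>RX\<^esub> letter (Inl r')) \<in> loc_relators R S"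
    "(letter (Inl (r \<oplus> r')), letter (Inl r) \<oplus>\<^bsub>RX\<^esub> letter (Inl r')) \<in> loc_relators R S"
    using rr unfolding loc_relators_def by blast+
  then show "\<iota> (r \<otimes> r') = \<iota> r \<otimes>\<^bsub>RS\<^esub> \<iota> r'" "\<iota> (r \<oplus> r') = \<iota> r \<oplus>\<^bsub>RS\<^esub> \<iota> r'"
    unfolding loc_map_def using rr letter_Inl_closed by (simp_all add: relator_cosets_eq)
next
  have "(letter (Inl \<one>), \<one>\<^bsub>RX\<^esub>) \<in> loc_relators R S"
    unfolding loc_relators_def by blast
  then show "\<iota> \<one> = \<one>\<^bsub>RS\<^esub>" unfolding loc_map_def by (simp add: relator_cosets_eq)
qed (rule loc_map_closed)

sublocale loc_map: ring_hom_ring R RS \<iota>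
  by (intro ring_hom_ringI2 ring_axioms RS.ring_axioms loc_map_ring_hom)

lemma loc_map_mult_loc_x_eq_one: "s \<in> S \<Longrightarrow> \<iota> s \<otimes>\<^bsub>RS\<^esub> \<xi> s = \<one>\<^bsub>RS\<^esub>"
  and loc_x_mult_loc_map_eq_one: "s \<in> S \<Longrightarrow> \<xi> s \<otimes>\<^bsub>RS\<^esub> \<iota> s = \<one>\<^bsub>RS\<^esub>"
proof -
  assume s: "s \<in> S"
  have "(letter (Inl s) \<otimes>\<^bsub>RX\<^esub> letter (Inr s), \<one>\<^bsub>RX\<^esub>) \<in> loc_relators R S"
    "(letter (Inr s) \<otimes>\<^bsub>RX\<^esub> letter (Inl s), \<one>\<^bsub>RX\<^esub>) \<in> loc_relators R S"
    using s unfolding loc_relators_def by blast+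
  then show "\<iota> s \<otimes>\<^bsub>RS\<^esub> \<xi> s = \<one>\<^bsub>RS\<^esub>" "\<xi> s \<otimes>\<^bsub>RS\<^esub> \<iota> s = \<one>\<^bsub>RS\<^esub>"
    unfolding loc_map_def loc_x_def using s S_subset letter_Inl_closed letter_Inr_closed
    by (auto simp: relator_cosets_eq simp flip: proj.hom_mult)
qed

lemma loc_map_Units: "s \<in> S \<Longrightarrow> \<iota> s \<in> Units RS"
  using loc_map_mult_loc_x_eq_one loc_x_mult_loc_map_eq_one loc_map_closed loc_x_closed S_subset
  unfolding Units_def by blast

lemma loc_x_eq_inv: "s \<in> S \<Longrightarrow> \<xi> s = inv\<^bsub>RS\<^esub> (\<iota> s)"
  using loc_map_mult_loc_x_eq_one loc_x_mult_loc_map_eq_one loc_map_closed loc_x_closed S_subset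
  by (intro RS.inv_unique') auto

lemma loc_ring_lift:
  assumes Q: "ring Q" and h: "h \<in> ring_hom R Q" and units: "\<And>s. s \<in> S \<Longrightarrow> h s \<in> Units Q"
  obtains \<chi> where "\<chi> \<in> ring_hom RS Q"
    "\<And>r. r \<in> carrier R \<Longrightarrow> \<chi> (\<iota> r) = h r" "\<And>s. s \<in> S \<Longrightarrow> \<chi> (\<xi> s) = inv\<^bsub>Q\<^esub> (h s)"
proof -
  interpret Q: ring Q by (rule Q)
  interpret h: ring_hom_ring R Q h by (intro ring_hom_ringI2 ring_axioms Q h)
  \<comment> \<open>Only the values of \<open>g\<close> on the alphabet \<open>loc_alph R S\<close> matter.\<close>
  define g where "g a = (case a of Inl r \<Rightarrow> if r \<in> carrier R then h r else \<zero>\<^bsub>Q\<^esub>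
                                 | Inr s \<Rightarrow> if s \<in> S then inv\<^bsub>Q\<^esub> (h s) else \<zero>\<^bsub>Q\<^esub>)" for a
  interpret E: free_ring_eval Q g
    by unfold_locales (auto simp: g_def units split: sum.split)
  define E where "E = free_eval Q g"
  have E_hom: "E \<in> ring_hom RX Q" unfolding E_def loc_free_def by (rule E.free_eval_ring_hom)
  interpret E: ring_hom_ring RX Q E by (intro ring_hom_ringI2 RX.ring_axioms Q E_hom)
  have E_Inl: "E (letter (Inl r)) = h r" if "r \<in> carrier R" for r
    using that unfolding E_def E.free_eval_letter by (simp add: g_def)
  have E_Inr: "E (letter (Inr s)) = inv\<^bsub>Q\<^esub> (h s)" if "s \<in> S" for s
    using that unfolding E_def E.free_eval_letter by (simp add: g_def)
  have "E f = E h'" if "(f, h') \<in> loc_relators R S" for f h'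
    using that S_subset units
    by (auto simp: loc_relators_def E_Inl E_Inr letter_Inl_closed letter_Inr_closed)
  then have "IS \<subseteq> a_kernel RX Q E"
    unfolding loc_ideal_def
    by (intro RX.genideal_minimal E.kernel_is_ideal loc_rels_subset_kernel Q E_hom)
  then obtain \<chi> where \<chi>: "\<chi> \<in> ring_hom RS Q" "\<And>f. f \<in> carrier RX \<Longrightarrow> \<chi> (IS +>\<^bsub>RX\<^esub> f) = E f"
    unfolding loc_ring_def using E.FactRing_lift ideal_loc_ideal by metis
  show thesis
    by (rule that[OF \<chi>(1)])
      (simp_all add: loc_map_def loc_x_def \<chi>(2) letter_Inl_closed letter_Inr_closed E_Inl E_Inr)
qed

lemma loc_ring_induct [consumes 1, case_names one add neg map x]:
  assumes X: "X \<in> carrier RS"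
    and P_one: "P \<one>\<^bsub>RS\<^esub>"
    and P_add: "\<And>Y Z. Y \<in> carrier RS \<Longrightarrow> Z \<in> carrier RS \<Longrightarrow> P Y \<Longrightarrow> P Z \<Longrightarrow> P (Y \<oplus>\<^bsub>RS\<^esub> Z)"
    and P_neg: "\<And>Y. Y \<in> carrier RS \<Longrightarrow> P Y \<Longrightarrow> P (\<ominus>\<^bsub>RS\<^esub> Y)"
    and P_map: "\<And>r Y. r \<in> carrier R \<Longrightarrow> Y \<in> carrier RS \<Longrightarrow> P Y \<Longrightarrow> P (\<iota> r \<otimes>\<^bsub>RS\<^esub> Y)"
    and P_x: "\<And>s Y. s \<in> S \<Longrightarrow> Y \<in> carrier RS \<Longrightarrow> P Y \<Longrightarrow> P (\<xi> s \<otimes>\<^bsub>RS\<^esub> Y)"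
  shows "P X"
proof -
  have P_word: "P (IS +>\<^bsub>RX\<^esub> free_monom 1 u)" if "set u \<subseteq> loc_alph R S" for u
    using that
  proof (induction u)
    case Nil
    have "free_monom 1 [] = \<one>\<^bsub>RX\<^esub>" by (simp add: loc_free_def free_ring_simps)
    then show ?case using P_one by simp
  next
    case (Cons a u)
    have u: "free_monom 1 u \<in> carrier RX"
      using Cons.prems unfolding loc_free_def by (intro free_monom_closed) auto
    have "free_monom 1 (a # u) = letter a \<otimes>\<^bsub>RX\<^esub> free_monom 1 u"
      by (simp add: loc_free_def free_ring_simps letter_eq_free_monom word_conv_free_monom)
    then show ?case
      using Cons u P_map P_x letter_Inl_closed letter_Inr_closed
      by (cases a) (auto simp: loc_alph_def loc_map_def loc_x_def)
  qed
  have P_zero: "P \<zero>\<^bsub>RS\<^esub>"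
    using P_add[OF _ _ P_neg[OF _ P_one] P_one] by (simp add: RS.l_neg)
  obtain f where f: "f \<in> carrier RX" "X = IS +>\<^bsub>RX\<^esub> f"
    using X unfolding loc_ring_carrier by blast
  have "P (IS +>\<^bsub>RX\<^esub> f)"
    using f(1)
  proof (induction f rule: free_ring_induct[where A = "loc_alph R S", folded loc_free_def,
      consumes 1, case_names zero word neg add])
    case zero
    then show ?case using P_zero by simp
  next
    case (word u)
    then show ?case by (rule P_word)
  next
    case (neg f)
    then show ?case using P_neg by simp
  next
    case (add f g)
    then show ?case using P_add by simp
  qed
  then show ?thesis using f by simp
qed

lemma loc_x_mult: "s \<in> S \<Longrightarrow> t \<in> S \<Longrightarrow> t \<otimes> s \<in> S \<Longrightarrow> \<xi> (t \<otimes> s) = \<xi> s \<otimes>\<^bsub>RS\<^esub> \<xi> t"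
  using S_subset loc_map_Units by (simp add: loc_x_eq_inv RS.Units_inv_mult subsetD)

lemma loc_map_mult_loc_x_swap:
  "u \<in> S \<Longrightarrow> t \<in> S \<Longrightarrow> r \<in> carrier R \<Longrightarrow> v \<in> carrier R \<Longrightarrow> u \<otimes> r = v \<otimes> t
    \<Longrightarrow> \<iota> r \<otimes>\<^bsub>RS\<^esub> \<xi> t = \<xi> u \<otimes>\<^bsub>RS\<^esub> \<iota> v"
  using S_subset loc_map_Units
  by (simp add: loc_x_eq_inv subsetD RS.mult_inv_eq_inv_mult loc_map_closed flip: loc_map.hom_mult)

lemma loc_x_mult_loc_map_swap:
  "u \<in> S \<Longrightarrow> t \<in> S \<Longrightarrow> r \<in> carrier R \<Longrightarrow> v \<in> carrier R \<Longrightarrow> r \<otimes> u = t \<otimes> v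
    \<Longrightarrow> \<xi> t \<otimes>\<^bsub>RS\<^esub> \<iota> r = \<iota> v \<otimes>\<^bsub>RS\<^esub> \<xi> u"
  using S_subset loc_map_Units
  by (simp add: loc_x_eq_inv subsetD RS.inv_mult_eq_mult_inv loc_map_closed flip: loc_map.hom_mult)

lemma frak_a_subset_ass: "frak_a R S \<subseteq> ass R S"
proof
  fix r assume "r \<in> frak_a R S"
  then obtain s t where st: "r \<in> carrier R" "s \<in> S" "t \<in> S" "s \<otimes> r \<otimes> t = \<zero>"
    unfolding frak_a_def by blast
  have S: "s \<in> carrier R" "t \<in> carrier R" using st S_subset by auto
  have "\<iota> r = \<xi> s \<otimes>\<^bsub>RS\<^esub> (\<iota> s \<otimes>\<^bsub>RS\<^esub> \<iota> r \<otimes>\<^bsub>RS\<^esub> \<iota> t) \<otimes>\<^bsub>RS\<^esub> \<xi> t"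
    using st S loc_map_closed loc_x_closed loc_map_mult_loc_x_eq_one loc_x_mult_loc_map_eq_one
    by (simp add: RS.m_assoc[symmetric], simp add: RS.m_assoc)
  also have "\<dots> = \<zero>\<^bsub>RS\<^esub>"
    using st S loc_x_closed by (simp flip: loc_map.hom_mult)
  finally show "r \<in> ass R S" unfolding ass_def using st by simp
qed

end

section \<open>Localization at an Ore set\<close>

locale ore_localization = ring R for R (structure) +
  fixes S
  assumes ore: "ore_set R S"

sublocale ore_localization \<subseteq> universal_localization
  using ore by unfold_locales (simp add: ore_set_def mult_set_def)

context ore_localization
begin

lemma S_one: "\<one> \<in> S" and S_zero: "\<zero> \<notin> S" and S_mult: "s \<in> S \<Longrightarrow> t \<in> S \<Longrightarrow> s \<otimes> t \<in> S"
  using ore unfolding ore_set_def mult_set_def by auto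

lemma S_closed: "s \<in> S \<Longrightarrow> s \<in> carrier R"
  using S_subset by auto

lemma left_ore: "r \<in> carrier R \<Longrightarrow> s \<in> S \<Longrightarrow> \<exists>s'\<in>S. \<exists>r'\<in>carrier R. s' \<otimes> r = r' \<otimes> s"
  using ore unfolding ore_set_def by blast

lemma right_ore: "r \<in> carrier R \<Longrightarrow> s \<in> S \<Longrightarrow> \<exists>s'\<in>S. \<exists>r'\<in>carrier R. r \<otimes> s' = s \<otimes> r'"
  using ore unfolding ore_set_def by blast

abbreviation \<aa> where "\<aa> \<equiv> frak_a R S"

lemma frak_a_iff: "x \<in> \<aa> \<longleftrightarrow> x \<in> carrier R \<and> (\<exists>s\<in>S. \<exists>t\<in>S. s \<otimes> x \<otimes> t = \<zero>)"
  unfolding frak_a_def by auto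

lemma frak_a_add:
  assumes "x \<in> \<aa>" "y \<in> \<aa>"
  shows "x \<oplus> y \<in> \<aa>"
proof -
  obtain s1 t1 where x: "x \<in> carrier R" "s1 \<in> S" "t1 \<in> S" "s1 \<otimes> x \<otimes> t1 = \<zero>"
    using assms(1) unfolding frak_a_iff by blast
  obtain s2 t2 where y: "y \<in> carrier R" "s2 \<in> S" "t2 \<in> S" "s2 \<otimes> y \<otimes> t2 = \<zero>"
    using assms(2) unfolding frak_a_iff by blast
  obtain u v where uv: "u \<in> S" "v \<in> carrier R" "u \<otimes> s1 = v \<otimes> s2"
    using left_ore[of s1 s2] x y S_closed by blast
  obtain p q where pq: "p \<in> S" "q \<in> carrier R" "t1 \<otimes> p = t2 \<otimes> q"
    using right_ore[of t1 t2] x y S_closed by blast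
  have c: "s1 \<in> carrier R" "t1 \<in> carrier R" "s2 \<in> carrier R" "t2 \<in> carrier R"
    "u \<in> carrier R" "p \<in> carrier R"
    using x y uv pq S_closed by auto
  have "(u \<otimes> s1) \<otimes> x \<otimes> (t1 \<otimes> p) = u \<otimes> (s1 \<otimes> x \<otimes> t1) \<otimes> p"
    using c x(1) by (simp add: m_assoc)
  also have "\<dots> = \<zero>" using c x(4) by simp
  finally have zero_x: "(u \<otimes> s1) \<otimes> x \<otimes> (t1 \<otimes> p) = \<zero>" .
  have "(u \<otimes> s1) \<otimes> y \<otimes> (t1 \<otimes> p) = (v \<otimes> s2) \<otimes> y \<otimes> (t2 \<otimes> q)"
    using uv pq by simp
  also have "\<dots> = v \<otimes> (s2 \<otimes> y \<otimes> t2) \<otimes> q"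
    using c y(1) uv(2) pq(2) by (simp add: m_assoc)
  also have "\<dots> = \<zero>" using uv(2) pq(2) y(4) by simp
  finally have zero_y: "(u \<otimes> s1) \<otimes> y \<otimes> (t1 \<otimes> p) = \<zero>" .
  have "(u \<otimes> s1) \<otimes> (x \<oplus> y) \<otimes> (t1 \<otimes> p) = \<zero>"
    using zero_x zero_y c x y by (simp add: r_distr l_distr)
  then show ?thesis
    unfolding frak_a_iff using x y S_mult[OF uv(1) x(2)] S_mult[OF x(3) pq(1)] by blast
qed

lemma frak_a_mult_left:
  assumes "x \<in> \<aa>" "r \<in> carrier R"
  shows "r \<otimes> x \<in> \<aa>"
proof -
  obtain s t where x: "x \<in> carrier R" "s \<in> S" "t \<in> S" "s \<otimes> x \<otimes> t = \<zero>"
    using assms(1) unfolding frak_a_iff by blast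
  obtain u v where uv: "u \<in> S" "v \<in> carrier R" "u \<otimes> r = v \<otimes> s"
    using left_ore[OF assms(2) x(2)] by blast
  have "u \<otimes> (r \<otimes> x) \<otimes> t = (u \<otimes> r) \<otimes> x \<otimes> t"
    using uv(1) x(1-3) assms(2) S_closed by (simp add: m_assoc)
  also have "\<dots> = v \<otimes> (s \<otimes> x \<otimes> t)"
    using uv(2,3) x(1-3) S_closed by (simp add: m_assoc)
  also have "\<dots> = \<zero>" using uv(2) x(4) by simp
  finally show ?thesis
    unfolding frak_a_iff using uv x assms(2) by auto
qed

lemma frak_a_mult_right:
  assumes "x \<in> \<aa>" "r \<in> carrier R"
  shows "x \<otimes> r \<in> \<aa>"
proof -
  obtain s t where x: "x \<in> carrier R" "s \<in> S" "t \<in> S" "s \<otimes> x \<otimes> t = \<zero>"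
    using assms(1) unfolding frak_a_iff by blast
  obtain p q where pq: "p \<in> S" "q \<in> carrier R" "r \<otimes> p = t \<otimes> q"
    using right_ore[OF assms(2) x(3)] by blast
  have "s \<otimes> (x \<otimes> r) \<otimes> p = s \<otimes> x \<otimes> (r \<otimes> p)"
    using pq(1) x(1-3) assms(2) S_closed by (simp add: m_assoc)
  also have "\<dots> = (s \<otimes> x \<otimes> t) \<otimes> q"
    using pq(2,3) x(1-3) S_closed by (simp add: m_assoc)
  also have "\<dots> = \<zero>" using pq(2) x(4) by simp
  finally show ?thesis
    unfolding frak_a_iff using pq x assms(2) by auto
qed

lemma ideal_frak_a: "ideal \<aa> R"
proof (rule idealI)
  show "subgroup \<aa> (add_monoid R)"
  proof (rule add.subgroupI)
    show "\<aa> \<subseteq> carrier R" unfolding frak_a_def by auto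
    have "\<zero> \<in> \<aa>" using S_one S_closed unfolding frak_a_iff by auto
    then show "\<aa> \<noteq> {}" by blast
  next
    fix x assume "x \<in> \<aa>"
    then obtain s t where x: "x \<in> carrier R" "s \<in> S" "t \<in> S" "s \<otimes> x \<otimes> t = \<zero>"
      unfolding frak_a_iff by blast
    then have "s \<otimes> (\<ominus> x) \<otimes> t = \<zero>" using S_closed by (simp add: r_minus l_minus)
    then show "\<ominus> x \<in> \<aa>" unfolding frak_a_iff using x by auto
  qed (rule frak_a_add)
qed (use ring_axioms frak_a_mult_left frak_a_mult_right in auto)

lemma frak_a_cancel_left:
  assumes "s \<in> S" "x \<in> carrier R" "s \<otimes> x \<in> \<aa>"
  shows "x \<in> \<aa>"
proof -
  obtain p q where pq: "p \<in> S" "q \<in> S" "p \<otimes> (s \<otimes> x) \<otimes> q = \<zero>"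
    using assms(3) unfolding frak_a_iff by blast
  then have "(p \<otimes> s) \<otimes> x \<otimes> q = \<zero>" using assms S_closed by (simp add: m_assoc)
  then show ?thesis unfolding frak_a_iff using assms pq S_mult by blast
qed

lemma frak_a_cancel_right:
  assumes "s \<in> S" "x \<in> carrier R" "x \<otimes> s \<in> \<aa>"
  shows "x \<in> \<aa>"
proof -
  obtain p q where pq: "p \<in> S" "q \<in> S" "p \<otimes> (x \<otimes> s) \<otimes> q = \<zero>"
    using assms(3) unfolding frak_a_iff by blast
  then have "p \<otimes> x \<otimes> (s \<otimes> q) = \<zero>" using assms S_closed by (simp add: m_assoc)
  then show ?thesis unfolding frak_a_iff using assms pq S_mult by blast
qed

lemma S_disjoint_frak_a: "s \<in> S \<Longrightarrow> s \<notin> \<aa>"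
proof
  assume "s \<in> S" "s \<in> \<aa>"
  then obtain p q where "p \<in> S" "q \<in> S" "p \<otimes> s \<otimes> q = \<zero>" unfolding frak_a_iff by blast
  then show False using S_mult[OF S_mult] S_zero \<open>s \<in> S\<close> by force
qed

sublocale frak_a: ideal \<aa> R
  by (rule ideal_frak_a)

abbreviation Rbar where "Rbar \<equiv> R Quot \<aa>"
abbreviation Sbar where "Sbar \<equiv> (\<lambda>r. \<aa> +> r) ` S"

lemma quotient_carrier: "carrier Rbar = (\<lambda>r. \<aa> +> r) ` carrier R"
  by (auto simp: FactRing_def A_RCOSETS_def')

lemma coset_eq_zero_iff: "x \<in> carrier R \<Longrightarrow> \<aa> +> x = \<zero>\<^bsub>Rbar\<^esub> \<longleftrightarrow> x \<in> \<aa>"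
  using frak_a.rcos_const_imp_mem a_rcos_zero[OF ideal_frak_a] by (auto simp: FactRing_def)

lemma quotient_mult: "x \<in> carrier R \<Longrightarrow> y \<in> carrier R \<Longrightarrow> (\<aa> +> x) \<otimes>\<^bsub>Rbar\<^esub> (\<aa> +> y) = \<aa> +> (x \<otimes> y)"
  by (simp add: FactRing_def frak_a.rcoset_mult_add)

lemma quotient_S_regular:
  assumes "s \<in> S" "x \<in> carrier R"
  shows "(\<aa> +> s) \<otimes>\<^bsub>Rbar\<^esub> (\<aa> +> x) = \<zero>\<^bsub>Rbar\<^esub> \<Longrightarrow> \<aa> +> x = \<zero>\<^bsub>Rbar\<^esub>"
    and "(\<aa> +> x) \<otimes>\<^bsub>Rbar\<^esub> (\<aa> +> s) = \<zero>\<^bsub>Rbar\<^esub> \<Longrightarrow> \<aa> +> x = \<zero>\<^bsub>Rbar\<^esub>"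
proof -
  have s: "s \<in> carrier R" using S_closed assms(1) .
  show "\<aa> +> x = \<zero>\<^bsub>Rbar\<^esub>" if "(\<aa> +> s) \<otimes>\<^bsub>Rbar\<^esub> (\<aa> +> x) = \<zero>\<^bsub>Rbar\<^esub>"
  proof -
    have "s \<otimes> x \<in> \<aa>"
      using that quotient_mult[OF s assms(2)] coset_eq_zero_iff[of "s \<otimes> x"] s assms(2) by simp
    then show ?thesis using frak_a_cancel_left[OF assms] coset_eq_zero_iff[OF assms(2)] by simp
  qed
  show "\<aa> +> x = \<zero>\<^bsub>Rbar\<^esub>" if "(\<aa> +> x) \<otimes>\<^bsub>Rbar\<^esub> (\<aa> +> s) = \<zero>\<^bsub>Rbar\<^esub>"
  proof -
    have "x \<otimes> s \<in> \<aa>"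
      using that quotient_mult[OF assms(2) s] coset_eq_zero_iff[of "x \<otimes> s"] s assms(2) by simp
    then show ?thesis using frak_a_cancel_right[OF assms] coset_eq_zero_iff[OF assms(2)] by simp
  qed
qed

lemma regular_left_ore_quotient: "regular_left_ore Rbar Sbar"
proof (intro regular_left_ore.intro regular_left_ore_axioms.intro frak_a.quotient_is_ring)
  show "Sbar \<subseteq> carrier Rbar" using S_subset unfolding quotient_carrier by blast
  show "\<one>\<^bsub>Rbar\<^esub> \<in> Sbar" using S_one by (simp add: FactRing_def)
next
  fix s t assume "s \<in> Sbar" "t \<in> Sbar"
  then show "s \<otimes>\<^bsub>Rbar\<^esub> t \<in> Sbar" using quotient_mult S_closed S_mult by auto
next
  fix a t assume "a \<in> carrier Rbar" "t \<in> Sbar"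
  then obtain x s where xs: "x \<in> carrier R" "a = \<aa> +> x" "s \<in> S" "t = \<aa> +> s"
    unfolding quotient_carrier by blast
  then obtain s' x' where "s' \<in> S" "x' \<in> carrier R" "s' \<otimes> x = x' \<otimes> s"
    using left_ore by blast
  then show "\<exists>t'\<in>Sbar. \<exists>a'\<in>carrier Rbar. t' \<otimes>\<^bsub>Rbar\<^esub> a = a' \<otimes>\<^bsub>Rbar\<^esub> t"
    using xs quotient_mult S_closed unfolding quotient_carrier
    by (intro bexI[of _ "\<aa> +> s'"] bexI[of _ "\<aa> +> x'"]) auto
next
  fix t a assume "t \<in> Sbar" "a \<in> carrier Rbar"
  then obtain x s where "x \<in> carrier R" "a = \<aa> +> x" "s \<in> S" "t = \<aa> +> s"
    unfolding quotient_carrier by blast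
  then show "t \<otimes>\<^bsub>Rbar\<^esub> a = \<zero>\<^bsub>Rbar\<^esub> \<Longrightarrow> a = \<zero>\<^bsub>Rbar\<^esub>"
    "a \<otimes>\<^bsub>Rbar\<^esub> t = \<zero>\<^bsub>Rbar\<^esub> \<Longrightarrow> a = \<zero>\<^bsub>Rbar\<^esub>"
    using quotient_S_regular by simp_all
qed

lemma left_denominator_set_quotient: "left_denominator_set Rbar Sbar"
proof -
  interpret Q: regular_left_ore Rbar Sbar by (rule regular_left_ore_quotient)
  show ?thesis
    unfolding left_denominator_set_def
  proof (intro conjI ballI impI)
    fix a t assume a: "a \<in> carrier Rbar" and t: "t \<in> Sbar" and "a \<otimes>\<^bsub>Rbar\<^esub> t = \<zero>\<^bsub>Rbar\<^esub>"
    then have "\<one>\<^bsub>Rbar\<^esub> \<otimes>\<^bsub>Rbar\<^esub> a = \<zero>\<^bsub>Rbar\<^esub>" using Q.T_right_regular[OF t a] by simp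
    then show "\<exists>t'\<in>Sbar. t' \<otimes>\<^bsub>Rbar\<^esub> a = \<zero>\<^bsub>Rbar\<^esub>" using Q.T_one by blast
  qed (use Q.T_subset Q.T_one Q.T_mult Q.T_left_ore in auto)
qed

lemma left_ring_of_fractions_kernel:
  assumes "left_ring_of_fractions Rbar Sbar Q \<phi>" "r \<in> carrier R" "\<phi> (\<aa> +> r) = \<zero>\<^bsub>Q\<^esub>"
  shows "r \<in> \<aa>"
proof -
  have "\<aa> +> r \<in> carrier Rbar" using assms(2) unfolding quotient_carrier by blast
  then obtain t where "t \<in> Sbar" "t \<otimes>\<^bsub>Rbar\<^esub> (\<aa> +> r) = \<zero>\<^bsub>Rbar\<^esub>"
    using left_ring_of_fractionsD(5)[OF assms(1)] assms(3) by blast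
  then obtain s where "s \<in> S" "\<aa> +> (s \<otimes> r) = \<zero>\<^bsub>Rbar\<^esub>"
    using assms(2) quotient_mult S_closed by auto
  then have "s \<otimes> r \<in> \<aa>"
    using assms(2) S_closed coset_eq_zero_iff[of "s \<otimes> r"] by auto
  then show ?thesis using frak_a_cancel_left \<open>s \<in> S\<close> assms(2) by blast
qed

lemma left_ring_of_fractions_lift:
  fixes Q :: "('q, 'n) ring_scheme"
  assumes lrf: "left_ring_of_fractions Rbar Sbar Q \<phi>"
  obtains \<chi> where "\<chi> \<in> ring_hom RS Q"
    "\<And>r. r \<in> carrier R \<Longrightarrow> \<chi> (\<iota> r) = \<phi> (\<aa> +> r)"
    "\<And>s. s \<in> S \<Longrightarrow> \<chi> (\<xi> s) = inv\<^bsub>Q\<^esub> (\<phi> (\<aa> +> s))"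
proof -
  have hom: "(\<lambda>r. \<phi> (\<aa> +> r)) \<in> ring_hom R Q"
    using ring_hom_trans[OF frak_a.rcos_ring_hom left_ring_of_fractionsD(2)[OF lrf]]
    by (simp add: comp_def)
  have units: "\<phi> (\<aa> +> s) \<in> Units Q" if "s \<in> S" for s
    using left_ring_of_fractionsD(3)[OF lrf] that by blast
  show thesis
    by (rule loc_ring_lift[OF left_ring_of_fractionsD(1)[OF lrf] hom], erule units, rule that)
qed

theorem ass_eq_frak_a: "ass R S = \<aa>"
proof
  show "ass R S \<subseteq> \<aa>"
  proof
    fix r assume "r \<in> ass R S"
    then have r: "r \<in> carrier R" "\<iota> r = \<zero>\<^bsub>RS\<^esub>" unfolding ass_def by auto
    interpret F: regular_left_ore Rbar Sbar by (rule regular_left_ore_quotient)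
    obtain \<chi> where \<chi>: "\<chi> \<in> ring_hom RS F.frac_ring"
      "\<And>r. r \<in> carrier R \<Longrightarrow> \<chi> (\<iota> r) = F.frac_map (\<aa> +> r)"
      "\<And>s. s \<in> S \<Longrightarrow> \<chi> (\<xi> s) = inv\<^bsub>F.frac_ring\<^esub> (F.frac_map (\<aa> +> s))"
      by (rule left_ring_of_fractions_lift[OF F.left_ring_of_fractions_frac_ring]) blast
    interpret \<chi>: ring_hom_ring RS F.frac_ring \<chi>
      by (intro ring_hom_ringI2 RS.ring_axioms F.ring_frac_ring \<chi>(1))
    have "F.frac_map (\<aa> +> r) = \<zero>\<^bsub>F.frac_ring\<^esub>" using \<chi>(2)[OF r(1)] r(2) by simp
    then show "r \<in> \<aa>"
      using left_ring_of_fractions_kernel[OF F.left_ring_of_fractions_frac_ring r(1)] by blast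
  qed
qed (rule frak_a_subset_ass)

lemma loc_map_loc_x_left_ore:
  assumes "r \<in> carrier R" "t \<in> S"
  obtains u v where "u \<in> S" "v \<in> carrier R" "\<iota> r \<otimes>\<^bsub>RS\<^esub> \<xi> t = \<xi> u \<otimes>\<^bsub>RS\<^esub> \<iota> v"
proof -
  obtain u v where u: "u \<in> S" and v: "v \<in> carrier R" and eq: "u \<otimes> r = v \<otimes> t"
    using left_ore[OF assms] by blast
  show thesis by (rule that[OF u v loc_map_mult_loc_x_swap[OF u assms(2,1) v eq]])
qed

lemma loc_x_loc_map_right_ore:
  assumes "r \<in> carrier R" "t \<in> S"
  obtains u v where "u \<in> S" "v \<in> carrier R" "\<xi> t \<otimes>\<^bsub>RS\<^esub> \<iota> r = \<iota> v \<otimes>\<^bsub>RS\<^esub> \<xi> u"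
proof -
  obtain u v where u: "u \<in> S" and v: "v \<in> carrier R" and eq: "r \<otimes> u = t \<otimes> v"
    using right_ore[OF assms] by blast
  show thesis by (rule that[OF u v loc_x_mult_loc_map_swap[OF u assms(2,1) v eq]])
qed

lemma loc_x_common_left:
  assumes "s \<in> S" "t \<in> S"
  obtains w a b where "w \<in> S" "a \<in> carrier R" "b \<in> carrier R"
    "\<xi> s = \<xi> w \<otimes>\<^bsub>RS\<^esub> \<iota> a" "\<xi> t = \<xi> w \<otimes>\<^bsub>RS\<^esub> \<iota> b"
proof -
  obtain u v where u: "u \<in> S" and v: "v \<in> carrier R" and eq: "u \<otimes> s = v \<otimes> t"
    using left_ore[OF S_closed[OF assms(1)] assms(2)] by blast
  have w: "u \<otimes> s \<in> S" using S_mult u assms by blast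
  have e1: "(u \<otimes> s) \<otimes> \<one> = u \<otimes> s" and e2: "(u \<otimes> s) \<otimes> \<one> = v \<otimes> t"
    using u v assms eq S_closed by simp_all
  show thesis
    using that[OF w S_closed[OF u] v] assms loc_x_closed
      loc_map_mult_loc_x_swap[OF w assms(1) one_closed S_closed[OF u] e1]
      loc_map_mult_loc_x_swap[OF w assms(2) one_closed v e2]
    by simp
qed

lemma loc_x_common_right:
  assumes "s \<in> S" "t \<in> S"
  obtains w a b where "w \<in> S" "a \<in> carrier R" "b \<in> carrier R"
    "\<xi> s = \<iota> a \<otimes>\<^bsub>RS\<^esub> \<xi> w" "\<xi> t = \<iota> b \<otimes>\<^bsub>RS\<^esub> \<xi> w"
proof -
  obtain u v where u: "u \<in> S" and v: "v \<in> carrier R" and eq: "s \<otimes> u = t \<otimes> v"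
    using right_ore[OF S_closed[OF assms(1)] assms(2)] by blast
  have w: "s \<otimes> u \<in> S" using S_mult u assms by blast
  have e1: "\<one> \<otimes> (s \<otimes> u) = s \<otimes> u" and e2: "\<one> \<otimes> (s \<otimes> u) = t \<otimes> v"
    using u v assms eq S_closed by simp_all
  show thesis
    using that[OF w S_closed[OF u] v] assms loc_x_closed
      loc_x_mult_loc_map_swap[OF w assms(1) one_closed S_closed[OF u] e1]
      loc_x_mult_loc_map_swap[OF w assms(2) one_closed v e2]
    by simp
qed

lemma left_fraction_form: "X \<in> carrier RS \<Longrightarrow> \<exists>s\<in>S. \<exists>r\<in>carrier R. X = \<xi> s \<otimes>\<^bsub>RS\<^esub> \<iota> r"
proof (induction rule: loc_ring_induct)
  case one
  show ?case using loc_x_mult_loc_map_eq_one[OF S_one] S_one by force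
next
  case (add Y Z)
  then obtain s r t r' where Y: "s \<in> S" "r \<in> carrier R" "Y = \<xi> s \<otimes>\<^bsub>RS\<^esub> \<iota> r"
    and Z: "t \<in> S" "r' \<in> carrier R" "Z = \<xi> t \<otimes>\<^bsub>RS\<^esub> \<iota> r'" by blast
  obtain w a b where w: "w \<in> S" "a \<in> carrier R" "b \<in> carrier R"
    "\<xi> s = \<xi> w \<otimes>\<^bsub>RS\<^esub> \<iota> a" "\<xi> t = \<xi> w \<otimes>\<^bsub>RS\<^esub> \<iota> b"
    using loc_x_common_left[OF Y(1) Z(1)] by blast
  have "Y \<oplus>\<^bsub>RS\<^esub> Z = \<xi> w \<otimes>\<^bsub>RS\<^esub> \<iota> (a \<otimes> r \<oplus> b \<otimes> r')"
    using Y Z w loc_x_closed loc_map_closed by (simp add: RS.m_assoc RS.r_distr)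
  then show ?case using w Y Z by blast
next
  case (neg Y)
  then obtain s r where "s \<in> S" "r \<in> carrier R" "Y = \<xi> s \<otimes>\<^bsub>RS\<^esub> \<iota> r" by blast
  moreover from this have "\<ominus>\<^bsub>RS\<^esub> Y = \<xi> s \<otimes>\<^bsub>RS\<^esub> \<iota> (\<ominus> r)"
    using loc_x_closed loc_map_closed by (simp add: RS.r_minus)
  ultimately show ?case by blast
next
  case (map r0 Y)
  then obtain t r where Y: "t \<in> S" "r \<in> carrier R" "Y = \<xi> t \<otimes>\<^bsub>RS\<^esub> \<iota> r" by blast
  obtain u v where uv: "u \<in> S" "v \<in> carrier R" "\<iota> r0 \<otimes>\<^bsub>RS\<^esub> \<xi> t = \<xi> u \<otimes>\<^bsub>RS\<^esub> \<iota> v"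
    using loc_map_loc_x_left_ore[OF map(1) Y(1)] by blast
  have "\<iota> r0 \<otimes>\<^bsub>RS\<^esub> Y = \<xi> u \<otimes>\<^bsub>RS\<^esub> \<iota> (v \<otimes> r)"
    using Y map(1) uv loc_x_closed loc_map_closed by (simp add: RS.m_assoc[symmetric])
  then show ?case using uv Y by blast
next
  case (x s Y)
  then obtain t r where Y: "t \<in> S" "r \<in> carrier R" "Y = \<xi> t \<otimes>\<^bsub>RS\<^esub> \<iota> r" by blast
  have "\<xi> s \<otimes>\<^bsub>RS\<^esub> Y = \<xi> (t \<otimes> s) \<otimes>\<^bsub>RS\<^esub> \<iota> r"
    using Y x(1) S_mult loc_x_mult loc_x_closed loc_map_closed by (simp add: RS.m_assoc)
  then show ?case using Y x(1) S_mult by blast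
qed

lemma right_fraction_form: "X \<in> carrier RS \<Longrightarrow> \<exists>s\<in>S. \<exists>r\<in>carrier R. X = \<iota> r \<otimes>\<^bsub>RS\<^esub> \<xi> s"
proof (induction rule: loc_ring_induct)
  case one
  show ?case using loc_map_mult_loc_x_eq_one[OF S_one] S_one by force
next
  case (add Y Z)
  then obtain s r t r' where Y: "s \<in> S" "r \<in> carrier R" "Y = \<iota> r \<otimes>\<^bsub>RS\<^esub> \<xi> s"
    and Z: "t \<in> S" "r' \<in> carrier R" "Z = \<iota> r' \<otimes>\<^bsub>RS\<^esub> \<xi> t" by blast
  obtain w a b where w: "w \<in> S" "a \<in> carrier R" "b \<in> carrier R"
    "\<xi> s = \<iota> a \<otimes>\<^bsub>RS\<^esub> \<xi> w" "\<xi> t = \<iota> b \<otimes>\<^bsub>RS\<^esub> \<xi> w"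
    using loc_x_common_right[OF Y(1) Z(1)] by blast
  have "Y \<oplus>\<^bsub>RS\<^esub> Z = \<iota> (r \<otimes> a \<oplus> r' \<otimes> b) \<otimes>\<^bsub>RS\<^esub> \<xi> w"
    using Y Z w loc_x_closed loc_map_closed by (simp add: RS.m_assoc[symmetric] RS.l_distr)
  then show ?case using w Y Z by blast
next
  case (neg Y)
  then obtain s r where "s \<in> S" "r \<in> carrier R" "Y = \<iota> r \<otimes>\<^bsub>RS\<^esub> \<xi> s" by blast
  moreover from this have "\<ominus>\<^bsub>RS\<^esub> Y = \<iota> (\<ominus> r) \<otimes>\<^bsub>RS\<^esub> \<xi> s"
    using loc_x_closed loc_map_closed by (simp add: RS.l_minus)
  ultimately show ?case by blast
next
  case (map r0 Y)
  then obtain t r where Y: "t \<in> S" "r \<in> carrier R" "Y = \<iota> r \<otimes>\<^bsub>RS\<^esub> \<xi> t" by blast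
  have "\<iota> r0 \<otimes>\<^bsub>RS\<^esub> Y = \<iota> (r0 \<otimes> r) \<otimes>\<^bsub>RS\<^esub> \<xi> t"
    using Y map(1) loc_x_closed loc_map_closed by (simp add: RS.m_assoc)
  then show ?case using Y map(1) by blast
next
  case (x s Y)
  then obtain t r where Y: "t \<in> S" "r \<in> carrier R" "Y = \<iota> r \<otimes>\<^bsub>RS\<^esub> \<xi> t" by blast
  obtain u v where uv: "u \<in> S" "v \<in> carrier R" "\<xi> s \<otimes>\<^bsub>RS\<^esub> \<iota> r = \<iota> v \<otimes>\<^bsub>RS\<^esub> \<xi> u"
    using loc_x_loc_map_right_ore[OF Y(2) x(1)] by blast
  have "\<xi> s \<otimes>\<^bsub>RS\<^esub> Y = \<iota> v \<otimes>\<^bsub>RS\<^esub> \<xi> (t \<otimes> u)"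
    using Y x(1) uv S_mult loc_x_mult loc_x_closed loc_map_closed
    by (simp add: RS.m_assoc[symmetric])
  then show ?case using uv Y S_mult by blast
qed

theorem localizable: "localizable R S"
  unfolding localizable_def
proof (intro conjI ballI)
  show "mult_set R S" using ore unfolding ore_set_def by blast
  show "\<one>\<^bsub>RS\<^esub> \<noteq> \<zero>\<^bsub>RS\<^esub>"
  proof
    assume "\<one>\<^bsub>RS\<^esub> = \<zero>\<^bsub>RS\<^esub>"
    then have "\<one> \<in> ass R S" unfolding ass_def by simp
    then show False using ass_eq_frak_a S_disjoint_frak_a S_one by blast
  qed
qed (use left_fraction_form right_fraction_form in auto)

context
  fixes Q :: "('q, 'n) ring_scheme" and \<phi> \<chi>
  assumes lrf: "left_ring_of_fractions Rbar Sbar Q \<phi>"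
    and \<chi>: "\<chi> \<in> ring_hom RS Q"
    and \<chi>_map: "\<And>r. r \<in> carrier R \<Longrightarrow> \<chi> (\<iota> r) = \<phi> (\<aa> +> r)"
    and \<chi>_x: "\<And>s. s \<in> S \<Longrightarrow> \<chi> (\<xi> s) = inv\<^bsub>Q\<^esub> (\<phi> (\<aa> +> s))"
begin

lemma lift_left_fraction:
  "s \<in> S \<Longrightarrow> r \<in> carrier R
    \<Longrightarrow> \<chi> (\<xi> s \<otimes>\<^bsub>RS\<^esub> \<iota> r) = inv\<^bsub>Q\<^esub> (\<phi> (\<aa> +> s)) \<otimes>\<^bsub>Q\<^esub> \<phi> (\<aa> +> r)"
  using ring_hom_mult[OF \<chi>] loc_x_closed loc_map_closed \<chi>_map \<chi>_x by simp

lemma lift_image_carrier: "\<chi> ` carrier RS = carrier Q"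
proof
  show "\<chi> ` carrier RS \<subseteq> carrier Q" using ring_hom_closed[OF \<chi>] by blast
  show "carrier Q \<subseteq> \<chi> ` carrier RS"
  proof
    fix q assume "q \<in> carrier Q"
    then obtain t a where ta: "t \<in> Sbar" "a \<in> carrier Rbar" "q = inv\<^bsub>Q\<^esub> (\<phi> t) \<otimes>\<^bsub>Q\<^esub> \<phi> a"
      using left_ring_of_fractionsD(4)[OF lrf] by blast
    obtain s r where sr: "s \<in> S" "t = \<aa> +> s" "r \<in> carrier R" "a = \<aa> +> r"
      using ta(1,2) unfolding quotient_carrier by blast
    then have "q = \<chi> (\<xi> s \<otimes>\<^bsub>RS\<^esub> \<iota> r)" using ta(3) lift_left_fraction by simp
    moreover have "\<xi> s \<otimes>\<^bsub>RS\<^esub> \<iota> r \<in> carrier RS" using sr loc_x_closed loc_map_closed by simp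
    ultimately show "q \<in> \<chi> ` carrier RS" by (rule image_eqI)
  qed
qed

lemma lift_inj_on: "inj_on \<chi> (carrier RS)"
proof -
  interpret Q: ring Q by (rule left_ring_of_fractionsD(1)[OF lrf])
  interpret \<chi>: ring_hom_ring RS Q \<chi> by (intro ring_hom_ringI2 RS.ring_axioms Q.ring_axioms \<chi>)
  have "X = \<zero>\<^bsub>RS\<^esub>" if X: "X \<in> carrier RS" "\<chi> X = \<zero>\<^bsub>Q\<^esub>" for X
  proof -
    obtain s r where sr: "s \<in> S" "r \<in> carrier R" "X = \<xi> s \<otimes>\<^bsub>RS\<^esub> \<iota> r"
      using left_fraction_form[OF X(1)] by blast
    have unit: "\<phi> (\<aa> +> s) \<in> Units Q"
      using left_ring_of_fractionsD(3)[OF lrf] sr(1) by blast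
    have "\<phi> (\<aa> +> r) \<in> carrier Q"
      using \<chi>_map[OF sr(2)] \<chi>.hom_closed[OF loc_map_closed[OF sr(2)]] by simp
    then have "\<phi> (\<aa> +> r) = \<phi> (\<aa> +> s) \<otimes>\<^bsub>Q\<^esub> (inv\<^bsub>Q\<^esub> (\<phi> (\<aa> +> s)) \<otimes>\<^bsub>Q\<^esub> \<phi> (\<aa> +> r))"
      using unit by (simp add: Q.m_assoc[symmetric] Q.Units_closed)
    also have "\<dots> = \<phi> (\<aa> +> s) \<otimes>\<^bsub>Q\<^esub> \<zero>\<^bsub>Q\<^esub>"
      using X(2) sr lift_left_fraction by simp
    also have "\<dots> = \<zero>\<^bsub>Q\<^esub>" using Q.Units_closed[OF unit] by simp
    finally have "r \<in> \<aa>" by (rule left_ring_of_fractions_kernel[OF lrf sr(2)])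
    then have "\<iota> r = \<zero>\<^bsub>RS\<^esub>" using frak_a_subset_ass unfolding ass_def by blast
    then show ?thesis using sr loc_x_closed by simp
  qed
  then have "a_kernel RS Q \<chi> = {\<zero>\<^bsub>RS\<^esub>}"
    unfolding a_kernel_def' using \<chi>.hom_zero by blast
  then show ?thesis by (rule \<chi>.trivial_ker_imp_inj)
qed

end

theorem loc_ring_iso_left_ring_of_fractions:
  fixes Q :: "('q, 'n) ring_scheme"
  assumes lrf: "left_ring_of_fractions Rbar Sbar Q \<phi>"
  shows "\<exists>\<psi>. \<psi> \<in> ring_iso Q RS \<and> (\<forall>r\<in>carrier R. \<psi> (\<phi> (\<aa> +> r)) = \<iota> r)"
proof -
  obtain \<chi> where \<chi>: "\<chi> \<in> ring_hom RS Q"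
    and \<chi>_map: "\<And>r. r \<in> carrier R \<Longrightarrow> \<chi> (\<iota> r) = \<phi> (\<aa> +> r)"
    and \<chi>_x: "\<And>s. s \<in> S \<Longrightarrow> \<chi> (\<xi> s) = inv\<^bsub>Q\<^esub> (\<phi> (\<aa> +> s))"
    by (rule left_ring_of_fractions_lift[OF lrf]) blast
  have inj: "inj_on \<chi> (carrier RS)" by (rule lift_inj_on[OF lrf \<chi> \<chi>_map \<chi>_x])
  have "\<chi> \<in> ring_iso RS Q"
    unfolding ring_iso_def bij_betw_def using \<chi> inj lift_image_carrier[OF lrf \<chi> \<chi>_map \<chi>_x] by simp
  moreover have "inv_into (carrier RS) \<chi> (\<phi> (\<aa> +> r)) = \<iota> r" if "r \<in> carrier R" for r
    using inv_into_f_f[OF inj loc_map_closed[OF that]] \<chi>_map[OF that] by simp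
  ultimately show ?thesis using ring_iso_set_sym[OF RS.ring_axioms] by blast
qed

end

theorem theorem3p1:
  fixes R :: "('a, 'm) ring_scheme"
  assumes "ring R"
  shows "(\<forall>S. ore_set R S \<longrightarrow> localizable R S) \<and>
         (\<forall>S. ore_set R S \<longrightarrow>
           localizable R S \<and> ass R S = frak_a R S
           \<and> left_denominator_set (R Quot frak_a R S)
                 ((\<lambda>r. a_r_coset R (frak_a R S) r) ` S)
           \<and> (\<forall>(Q :: ('q, 'n) ring_scheme) \<phi>.
                 left_ring_of_fractions (R Quot frak_a R S)
                   ((\<lambda>r. a_r_coset R (frak_a R S) r) ` S) Q \<phi> \<longrightarrow>
                 (\<exists>\<psi>. \<psi> \<in> ring_iso Q (loc_ring R S) \<and>
                    (\<forall>r\<in>carrier R. \<psi> (\<phi> (a_r_coset R (frak_a R S) r)) = loc_map R S r))))"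
proof -
  have ore: "ore_localization R S" if "ore_set R S" for S
    using assms that by (simp add: ore_localization_def ore_localization_axioms_def)
  show ?thesis
    by (intro conjI allI impI)
      (simp_all add: ore_localization.localizable[OF ore] ore_localization.ass_eq_frak_a[OF ore]
        ore_localization.left_denominator_set_quotient[OF ore]
        ore_localization.loc_ring_iso_left_ring_of_fractions[OF ore])
qed

end
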